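(* Let $\Sigma\in\mathbb{R}^{d\times d}$ be symmetric positive definite with $(\Sigma^{-1})_{ii}=1$ for all $i=1,\dots,d$, and let $\kappa=\lambda_{\max}(\Sigma)/\lambda_{\min}(\Sigma)$. Then $$\mathbb{E}_R\Big[\inf_{q\in\mathcal{P}_{\mathrm{prod}}}\mathrm{KL}\big(q\,\|\,\mathcal{N}(0,R\Sigma R^\top)\big)\Big]\le\Big(1-\frac{2}{(d+2)\kappa^2}\Big)\,\mathrm{KL}\big(\mathcal{N}(0,I_d)\,\|\,\mathcal{N}(0,\Sigma)\big),$$ where the expectation is over $R$ drawn from the uniform (Haar) distribution on the orthogonal group $O(d)$.
   Context: $\mathcal{P}_{\mathrm{prod}}$ is the set of product probability measures on $\mathbb{R}^d$ with positive continuously differentiable densities. $\mathrm{KL}(q\|p)=\mathbb{E}_q[\log(q/p)]$. The hypothesis $(\Sigma^{-1})_{ii}=1$ is equivalent to $\mathcal{N}(0,I_d)$ being the optimal product (mean-field) approximation of $\mathcal{N}(0,\Sigma)$ in reverse KL. *)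

theory Defs
  imports "HOL-Probability.Probability"
begin

definition sym_pos_def :: "real^'n^'n \<Rightarrow> bool" where
  "sym_pos_def S \<longleftrightarrow> transpose S = S \<and> (\<forall>x. x \<noteq> 0 \<longrightarrow> x \<bullet> (S *v x) > 0)"

definition mat_eigenvalues :: "real^'n^'n \<Rightarrow> real set" where
  "mat_eigenvalues A = {l. \<exists>v. v \<noteq> 0 \<and> A *v v = l *\<^sub>R v}"

definition cond_number :: "real^'n^'n \<Rightarrow> real" where
  "cond_number A = Max (mat_eigenvalues A) / Min (mat_eigenvalues A)"

definition gauss_density :: "real^'n^'n \<Rightarrow> real^'n \<Rightarrow> real" where
  "gauss_density S x =
     exp (- (x \<bullet> (matrix_inv S *v x)) / 2) / sqrt ((2 * pi) ^ CARD('n) * det S)"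

definition KL_dens :: "('a::euclidean_space \<Rightarrow> real) \<Rightarrow> ('a \<Rightarrow> real) \<Rightarrow> ereal" where
  "KL_dens q p =
     enn2ereal (\<integral>\<^sup>+ x. ennreal (q x * ln (q x / p x)) \<partial>lborel)
   - enn2ereal (\<integral>\<^sup>+ x. ennreal (- (q x * ln (q x / p x))) \<partial>lborel)"

definition prod_densities :: "(real^'n \<Rightarrow> real) set" where
  "prod_densities = {q. \<exists>g :: 'n \<Rightarrow> real \<Rightarrow> real.
      (\<forall>i. (\<forall>t. g i t > 0) \<and> g i C1_differentiable_on UNIV \<and>
           g i \<in> borel_measurable borel \<and> (\<integral>\<^sup>+ t. ennreal (g i t) \<partial>lborel) = 1) \<and>
      (\<forall>x. q x = (\<Prod>i\<in>UNIV. g i (x $ i)))}"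

text \<open>Haar (uniform) probability measure on the orthogonal group O(d), viewed as a
  Borel probability measure on d x d matrices concentrated on O(d) and invariant under
  left multiplication by orthogonal matrices (this characterises it uniquely).\<close>
definition haar_orthogonal :: "(real^'n^'n) measure \<Rightarrow> bool" where
  "haar_orthogonal M \<longleftrightarrow> prob_space M \<and> sets M = sets borel \<and>
     measure M {R. orthogonal_matrix R} = 1 \<and>
     (\<forall>Q. orthogonal_matrix Q \<longrightarrow> distr M M (\<lambda>R. Q ** R) = M)"

end

theory Submission
  imports Defs
begin

text \<open>
  Let A be the inverse of \<Sigma>, with eigenvalues in [l, L], so that \<kappa> = L / l. The unit diagonal
  gives tr A = d, hence l \<le> 1 \<le> L and KL(N(0, I) \<parallel> N(0, \<Sigma>)) = K = (ln det \<Sigma>) / 2.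
  For a rotation R put y_i = (R A R^T)_ii \<in> (0, L]; then \<Sum>_i (y_i - 1) = 0, and the product of
  the centred normals with variances 1 / y_i is at KL divergence K + \<Sum>_i (ln y_i) / 2 from
  N(0, R \<Sigma> R^T). The bound ln y \<le> (y - 1) - (y - 1)^2 / (2 L^2) turns this into
  K - |diag (R C R^T)|^2 / (4 L^2) with C = A - I. Left invariance of Haar measure under the
  rotations by 45 degrees in the coordinate planes gives E |diag (R C R^T)|^2 = 2 |C|_F^2 / (d + 2)
  for traceless symmetric C, and the reverse bound ln \<lambda> \<ge> (\<lambda> - 1) - (\<lambda> - 1)^2 / (2 l^2), applied
  to the eigenvalues of A, gives |C|_F^2 \<ge> 4 l^2 K.
\<close>

section \<open>Symmetric matrices and the spectral theorem\<close>

lemma matrix_inv_eqI: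
  fixes A B :: "'a::field^'n^'n"
  assumes "A ** B = mat 1"
  shows "matrix_inv A = B"
proof -
  have "B ** A = mat 1" using assms matrix_left_right_inverse by blast
  have "A ** matrix_inv A = mat 1 \<and> matrix_inv A ** A = mat 1"
    unfolding matrix_inv_def by (rule someI[of _ B]) (use assms \<open>B ** A = mat 1\<close> in blast)
  then show ?thesis
    by (metis assms matrix_mul_assoc matrix_mul_lid)
qed

lemma transpose_diff: "transpose (X - Y) = transpose X - (transpose Y :: 'a::ab_group_add^'n^'m)"
  by (simp add: vec_eq_iff transpose_def)

lemma matrix_diff_ldistrib: "(A :: 'a::ring_1^'n^'m) ** (B - C) = A ** B - A ** C"
  by (simp add: vec_eq_iff matrix_matrix_mult_def sum_subtractf right_diff_distrib)

lemma matrix_diff_rdistrib: "((B :: 'a::ring_1^'n^'m) - C) ** A = B ** A - C ** A"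
  by (simp add: vec_eq_iff matrix_matrix_mult_def sum_subtractf left_diff_distrib)

lemma symmetric_matrix_inner_commute:
  fixes A :: "real^'n^'n"
  assumes "transpose A = A"
  shows "(A *v x) \<bullet> y = x \<bullet> (A *v y)"
  by (metis assms dot_lmul_matrix vector_transpose_matrix)

lemma linear_le_quadratic_imp_zero:
  fixes a c :: real
  assumes "\<And>t. t * a \<le> t\<^sup>2 * c"
  shows "a = 0"
proof -
  define t where "t = a / (\<bar>c\<bar> + 1)"
  have pos: "\<bar>c\<bar> + 1 > 0" by simp
  have "t * a * (\<bar>c\<bar> + 1)\<^sup>2 \<le> t\<^sup>2 * c * (\<bar>c\<bar> + 1)\<^sup>2"
    using assms[of t] by (intro mult_right_mono) auto
  moreover have "t * a * (\<bar>c\<bar> + 1)\<^sup>2 = a\<^sup>2 * (\<bar>c\<bar> + 1)"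
    using pos by (simp add: t_def power2_eq_square)
  moreover have "t\<^sup>2 * c * (\<bar>c\<bar> + 1)\<^sup>2 = a\<^sup>2 * c"
    using pos by (simp add: t_def power_divide)
  ultimately have "a\<^sup>2 * (\<bar>c\<bar> + 1) \<le> a\<^sup>2 * c" by simp
  then have "a\<^sup>2 * (\<bar>c\<bar> - c + 1) \<le> 0" by (simp add: algebra_simps)
  moreover have "\<bar>c\<bar> - c + 1 > 0" by simp
  ultimately have "a\<^sup>2 \<le> 0" by (simp add: mult_le_0_iff)
  then show ?thesis by simp
qed

lemma symmetric_rayleigh_max_eigenvector:
  fixes A :: "real^'n^'n"
  assumes sym: "transpose A = A" and W: "subspace W"
    and inv: "\<And>x. x \<in> W \<Longrightarrow> A *v x \<in> W"
    and v: "v \<in> W" "norm v = 1"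
    and max: "\<And>x. x \<in> W \<Longrightarrow> norm x = 1 \<Longrightarrow> x \<bullet> (A *v x) \<le> v \<bullet> (A *v v)"
  shows "A *v v = (v \<bullet> (A *v v)) *\<^sub>R v"
proof -
  define m where "m = v \<bullet> (A *v v)"
  have bound: "x \<bullet> (A *v x) \<le> m * (norm x)\<^sup>2" if "x \<in> W" for x
  proof (cases "x = 0")
    case False
    have "(x /\<^sub>R norm x) \<bullet> (A *v (x /\<^sub>R norm x)) \<le> m"
      using max[of "x /\<^sub>R norm x"] that False W by (simp add: m_def subspace_scale)
    then show ?thesis
      using False by (simp add: matrix_vector_mult_scaleR field_simps power2_eq_square)
  qed simp
  have perp: "(A *v v) \<bullet> w = 0" if w: "w \<in> W" "w \<bullet> v = 0" for w
  proof (rule linear_le_quadratic_imp_zero)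
    fix t :: real
    have "v + t *\<^sub>R w \<in> W" using W v w by (simp add: subspace_add subspace_scale)
    then have "(v + t *\<^sub>R w) \<bullet> (A *v (v + t *\<^sub>R w)) \<le> m * (norm (v + t *\<^sub>R w))\<^sup>2"
      by (rule bound)
    moreover have "(norm (v + t *\<^sub>R w))\<^sup>2 = 1 + t\<^sup>2 * (norm w)\<^sup>2"
      using v w unfolding power2_norm_eq_inner
      by (simp add: inner_add_left inner_add_right inner_commute power2_eq_square norm_eq_1)
    moreover have "(v + t *\<^sub>R w) \<bullet> (A *v (v + t *\<^sub>R w)) =
        m + 2 * t * ((A *v v) \<bullet> w) + t\<^sup>2 * (w \<bullet> (A *v w))"
      using symmetric_matrix_inner_commute[OF sym, of v w]
      by (simp add: m_def matrix_vector_right_distrib inner_add_left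
          inner_add_right inner_commute power2_eq_square algebra_simps)
    ultimately show "t * ((A *v v) \<bullet> w) \<le> t\<^sup>2 * ((m * (norm w)\<^sup>2 - w \<bullet> (A *v w)) / 2)"
      by (simp add: algebra_simps)
  qed
  define z where "z = A *v v - m *\<^sub>R v"
  have "z \<in> W" using W v inv by (simp add: z_def subspace_diff subspace_scale)
  moreover have "z \<bullet> v = 0"
    using v by (simp add: z_def m_def inner_diff_left inner_diff_right inner_commute norm_eq_1)
  ultimately have "z \<bullet> z = 0"
    using perp[of z] by (simp add: z_def inner_diff_left inner_commute)
  then show ?thesis by (simp add: z_def m_def)
qed

lemma symmetric_invariant_subspace_eigenvector:
  fixes A :: "real^'n^'n"
  assumes sym: "transpose A = A" and W: "subspace W"
    and inv: "\<And>x. x \<in> W \<Longrightarrow> A *v x \<in> W"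
    and x0: "x0 \<in> W" "x0 \<noteq> 0"
  obtains v where "v \<in> W" "norm v = 1" "A *v v = (v \<bullet> (A *v v)) *\<^sub>R v"
proof -
  have "compact (W \<inter> sphere 0 1)"
    using closed_subspace[OF W] by (simp add: closed_Int_compact)
  moreover have "x0 /\<^sub>R norm x0 \<in> W \<inter> sphere 0 1"
    using W x0 by (simp add: subspace_scale)
  then have "W \<inter> sphere 0 1 \<noteq> {}" by blast
  moreover have "continuous_on (W \<inter> sphere 0 1) (\<lambda>x. x \<bullet> (A *v x))"
    by (intro continuous_intros linear_continuous_on matrix_vector_mul_bounded_linear)
  ultimately obtain v where "v \<in> W \<inter> sphere 0 1"
    and "\<forall>x\<in>W \<inter> sphere 0 1. x \<bullet> (A *v x) \<le> v \<bullet> (A *v v)"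
    by (blast dest: continuous_attains_sup)
  then show ?thesis
    using that symmetric_rayleigh_max_eigenvector[OF sym W inv, of v] by auto
qed

lemma symmetric_orthonormal_eigenvectors:
  fixes A :: "real^'n^'n"
  assumes sym: "transpose A = A" and "k \<le> CARD('n)"
  shows "\<exists>B. finite B \<and> card B = k \<and> pairwise orthogonal B \<and>
           (\<forall>b\<in>B. norm b = 1 \<and> A *v b = (b \<bullet> (A *v b)) *\<^sub>R b)"
  using assms(2)
proof (induction k)
  case 0
  show ?case by (intro exI[of _ "{}"]) auto
next
  case (Suc k)
  then obtain B where fin: "finite B" and card: "card B = k" and orth: "pairwise orthogonal B"
    and eig: "\<forall>b\<in>B. norm b = 1 \<and> A *v b = (b \<bullet> (A *v b)) *\<^sub>R b"
    by auto
  define W where "W = {y. \<forall>x\<in>B. orthogonal x y}"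
  have W: "subspace W" unfolding W_def by (rule subspace_orthogonal_to_vectors)
  have "independent B"
    using orth eig pairwise_orthogonal_independent by force
  then have "dim B < DIM(real^'n)"
    using card Suc.prems dim_eq_card_independent by fastforce
  then obtain x0 where x0: "x0 \<noteq> 0" "\<And>y. y \<in> span B \<Longrightarrow> orthogonal x0 y"
    using orthogonal_to_subspace_exists by blast
  have "x0 \<in> W"
    using x0(2) span_base by (auto simp: W_def orthogonal_commute)
  moreover have "A *v x \<in> W" if "x \<in> W" for x
  proof -
    have "b \<bullet> (A *v x) = (b \<bullet> (A *v b)) * (b \<bullet> x)" if "b \<in> B" for b
      using that eig symmetric_matrix_inner_commute[OF sym, of b x] by (metis inner_scaleR_left)
    then show ?thesis using \<open>x \<in> W\<close> by (simp add: W_def orthogonal_def)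
  qed
  ultimately obtain v where v: "v \<in> W" "norm v = 1" "A *v v = (v \<bullet> (A *v v)) *\<^sub>R v"
    using symmetric_invariant_subspace_eigenvector[OF sym W] x0(1) by metis
  have "v \<notin> B"
    using v by (auto simp: W_def orthogonal_def)
  then show ?case
    using fin card orth eig v
    by (intro exI[of _ "insert v B"])
      (auto simp: pairwise_insert W_def orthogonal_commute)
qed

definition diag_mat :: "('n \<Rightarrow> 'a::zero) \<Rightarrow> 'a^'n^'n" where
  "diag_mat l = (\<chi> i j. if i = j then l i else 0)"

lemma diag_mat_mult: "diag_mat a ** diag_mat b = diag_mat (\<lambda>i. a i * b i :: 'a::semiring_1)"
proof -
  have "(\<Sum>k\<in>UNIV. (if i = k then a i else 0) * (if k = j then b k else 0)) =
      (\<Sum>k\<in>UNIV. if k = i then (if i = j then a i * b i else 0) else 0)" for i j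
    by (intro sum.cong) auto
  then show ?thesis by (simp add: vec_eq_iff matrix_matrix_mult_def diag_mat_def)
qed

lemma diag_mat_one: "diag_mat (\<lambda>_. 1) = (mat 1 :: 'a::{zero,one}^'n^'n)"
  by (simp add: vec_eq_iff diag_mat_def mat_def)

lemma diag_mat_diff: "diag_mat a - diag_mat b = diag_mat (\<lambda>i. a i - b i :: 'a::group_add)"
  by (simp add: vec_eq_iff diag_mat_def)

lemma transpose_diag_mat: "transpose (diag_mat l) = diag_mat l"
  by (simp add: vec_eq_iff transpose_def diag_mat_def)

lemma det_diag_mat: "det (diag_mat l) = (\<Prod>i\<in>UNIV. l i :: 'a::comm_ring_1)"
  by (subst det_diagonal) (auto simp: diag_mat_def)

lemma trace_diag_mat: "trace (diag_mat l) = (\<Sum>i\<in>UNIV. l i :: 'a::semiring_1)"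
  by (simp add: trace_def diag_mat_def)

lemma diag_mat_vector_mult:
  fixes l :: "'n::finite \<Rightarrow> 'a::semiring_1"
  shows "diag_mat l *v x = (\<chi> i. l i * x $ i)"
proof -
  have "(\<Sum>j\<in>UNIV. (if i = j then l i else 0) * x $ j) = (\<Sum>j\<in>UNIV. if j = i then l i * x $ i else 0)" for i
    by (intro sum.cong) auto
  then show ?thesis by (simp add: vec_eq_iff matrix_vector_mult_def diag_mat_def)
qed

lemma inner_diag_mat: "x \<bullet> (diag_mat l *v x) = (\<Sum>i\<in>UNIV. l i * (x $ i)\<^sup>2)"
  by (simp add: diag_mat_vector_mult inner_vec_def power2_eq_square algebra_simps)

lemma inner_diag_mat_axis: "axis j 1 \<bullet> (diag_mat l *v axis j 1) = (l j :: real)"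
  by (simp add: diag_mat_vector_mult inner_axis')

lemma symmetric_matrix_diagonalization:
  fixes A :: "real^'n^'n"
  assumes sym: "transpose A = A"
  obtains P l where "orthogonal_matrix P" "A = P ** diag_mat l ** transpose P"
proof -
  obtain B where fin: "finite B" and card: "card B = CARD('n)" and orth: "pairwise orthogonal B"
    and eig: "\<forall>b\<in>B. norm b = 1 \<and> A *v b = (b \<bullet> (A *v b)) *\<^sub>R b"
    using symmetric_orthonormal_eigenvectors[OF sym, of "CARD('n)"] by auto
  obtain e where e: "bij_betw e (UNIV :: 'n set) B"
    using finite_same_card_bij[of "UNIV :: 'n set" B] fin card by auto
  define P :: "real^'n^'n" where "P = (\<chi> i j. e j $ i)"
  define l where "l j = e j \<bullet> (A *v e j)" for j
  have eB: "e j \<in> B" for j using e bij_betwE by blast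
  have ee: "e j \<bullet> e k = (if j = k then 1 else 0)" for j k
  proof (cases "j = k")
    case False
    then have "e j \<noteq> e k" using e by (auto simp: bij_betw_def inj_on_def)
    then show ?thesis using False orth eB by (auto simp: pairwise_def orthogonal_def)
  qed (use eig eB in \<open>simp add: norm_eq_1\<close>)
  have P: "orthogonal_matrix P"
    unfolding orthogonal_matrix
  proof (simp add: vec_eq_iff, intro allI)
    fix j k
    have "(transpose P ** P) $ j $ k = e j \<bullet> e k"
      by (simp add: matrix_matrix_mult_def transpose_def P_def inner_vec_def)
    then show "(transpose P ** P) $ j $ k = mat 1 $ j $ k"
      by (simp add: ee mat_def)
  qed
  have "A ** P = P ** diag_mat l"
  proof (simp add: vec_eq_iff, intro allI)
    fix i j
    have "(A ** P) $ i $ j = (A *v e j) $ i"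
      by (simp add: matrix_matrix_mult_def matrix_vector_mult_def P_def)
    also have "A *v e j = l j *\<^sub>R e j"
      using eig eB[of j] unfolding l_def by blast
    also have "(l j *\<^sub>R e j) $ i = (P ** diag_mat l) $ i $ j"
      by (simp add: matrix_matrix_mult_def diag_mat_def P_def if_distrib cong: if_cong)
    finally show "(A ** P) $ i $ j = (P ** diag_mat l) $ i $ j" .
  qed
  then have "A = P ** diag_mat l ** transpose P"
    using P by (metis matrix_mul_assoc matrix_mul_rid orthogonal_matrix_def)
  with P show ?thesis using that by blast
qed

section \<open>Conjugation by orthogonal matrices\<close>

lemma transpose_matrix_conj:
  fixes P X :: "'a::comm_semiring_1^'n^'n"
  shows "transpose (P ** X ** transpose P) = P ** transpose X ** transpose P"
  by (simp add: matrix_transpose_mul matrix_mul_assoc)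

lemma matrix_conj_entry:
  fixes R C :: "real^'n^'n"
  shows "(R ** C ** transpose R) $ i $ k = R $ i \<bullet> (C *v R $ k)"
  by (simp add: matrix_matrix_mult_def matrix_vector_mult_def inner_vec_def transpose_def
      sum_distrib_left sum_distrib_right mult.assoc mult.left_commute) (rule sum.swap)

lemma orthogonal_conj_mult:
  fixes P :: "real^'n^'n"
  assumes "orthogonal_matrix P"
  shows "(P ** X ** transpose P) ** (P ** Y ** transpose P) = P ** (X ** Y) ** transpose P"
proof -
  have "(P ** X ** transpose P) ** (P ** Y ** transpose P) = P ** X ** (transpose P ** P) ** Y ** transpose P"
    by (simp add: matrix_mul_assoc)
  also have "\<dots> = P ** (X ** Y) ** transpose P"
    using assms by (simp add: orthogonal_matrix matrix_mul_assoc)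
  finally show ?thesis .
qed

lemma orthogonal_conj_mat_1:
  fixes P :: "real^'n^'n"
  assumes "orthogonal_matrix P"
  shows "P ** mat 1 ** transpose P = mat 1"
  using assms by (simp add: orthogonal_matrix_def)

lemma trace_orthogonal_conj:
  fixes P :: "real^'n^'n"
  assumes "orthogonal_matrix P"
  shows "trace (P ** X ** transpose P) = trace X"
  using assms trace_mul_sym[of "P ** X" "transpose P"]
  by (simp add: orthogonal_matrix matrix_mul_assoc)

lemma det_orthogonal_conj:
  fixes P :: "real^'n^'n"
  assumes "orthogonal_matrix P"
  shows "det (P ** X ** transpose P) = det X"
proof -
  have "det P * det P = 1" using det_orthogonal_matrix[OF assms] by auto
  then show ?thesis by (simp add: det_mul)
qed

lemma inner_matrix_vector_mult_transpose:
  fixes P :: "real^'n^'n"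
  shows "u \<bullet> (P *v y) = (transpose P *v u) \<bullet> y"
  by (simp add: dot_lmul_matrix)

lemma inner_orthogonal_conj:
  fixes P :: "real^'n^'n"
  shows "u \<bullet> ((P ** X ** transpose P) *v u) = (transpose P *v u) \<bullet> (X *v (transpose P *v u))"
proof -
  have "u \<bullet> ((P ** X ** transpose P) *v u) = u \<bullet> (P *v (X *v (transpose P *v u)))"
    by (simp only: matrix_vector_mul_assoc matrix_mul_assoc)
  also have "\<dots> = (transpose P *v u) \<bullet> (X *v (transpose P *v u))"
    by (rule inner_matrix_vector_mult_transpose)
  finally show ?thesis .
qed

lemma norm_transpose_orthogonal_mult:
  fixes P :: "real^'n^'n"
  assumes "orthogonal_matrix P"
  shows "norm (transpose P *v u) = norm u"
proof -
  have "u \<bullet> u = (transpose P *v u) \<bullet> (transpose P *v u)"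
    using inner_orthogonal_conj[of u P "mat 1"]
    by (simp only: orthogonal_conj_mat_1[OF assms] matrix_vector_mul_lid)
  then show ?thesis
    unfolding norm_eq_sqrt_inner by simp
qed

lemma orthogonal_matrix_transpose_mult_cancel:
  fixes P :: "real^'n^'n"
  assumes "orthogonal_matrix P"
  shows "transpose P *v (P *v x) = x"
  using assms unfolding orthogonal_matrix_def
  by (simp only: matrix_vector_mul_assoc matrix_vector_mul_lid)

lemma matrix_inv_orthogonal_conj:
  fixes R S :: "real^'n^'n"
  assumes R: "orthogonal_matrix R" and S: "S ** matrix_inv S = mat 1"
  shows "matrix_inv (R ** S ** transpose R) = R ** matrix_inv S ** transpose R"
proof (rule matrix_inv_eqI)
  have "(R ** S ** transpose R) ** (R ** matrix_inv S ** transpose R) = R ** mat 1 ** transpose R"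
    by (simp only: orthogonal_conj_mult[OF R] S)
  also have "\<dots> = mat 1"
    by (rule orthogonal_conj_mat_1[OF R])
  finally show "(R ** S ** transpose R) ** (R ** matrix_inv S ** transpose R) = mat 1" .
qed

definition frob_sq :: "real^'n^'n \<Rightarrow> real" where
  "frob_sq M = (\<Sum>i\<in>UNIV. \<Sum>j\<in>UNIV. (M $ i $ j)\<^sup>2)"

lemma frob_sq_eq_trace: "frob_sq M = trace (transpose M ** M)"
proof -
  have "trace (transpose M ** M) = (\<Sum>j\<in>UNIV. \<Sum>i\<in>UNIV. (M $ i $ j)\<^sup>2)"
    by (simp add: trace_def matrix_matrix_mult_def transpose_def power2_eq_square)
  also have "\<dots> = frob_sq M"
    unfolding frob_sq_def by (rule sum.swap)
  finally show ?thesis ..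
qed

lemma frob_sq_orthogonal_conj:
  fixes P :: "real^'n^'n"
  assumes "orthogonal_matrix P"
  shows "frob_sq (P ** X ** transpose P) = frob_sq X"
  unfolding frob_sq_eq_trace transpose_matrix_conj orthogonal_conj_mult[OF assms]
    trace_orthogonal_conj[OF assms] ..

lemma frob_sq_diag_mat: "frob_sq (diag_mat l) = (\<Sum>i\<in>UNIV. (l i)\<^sup>2)"
  unfolding frob_sq_eq_trace transpose_diag_mat diag_mat_mult trace_diag_mat
  by (simp add: power2_eq_square)

lemma sum_diag_sq_le_frob_sq: "(\<Sum>i\<in>UNIV. (M $ i $ i)\<^sup>2) \<le> frob_sq M"
  unfolding frob_sq_def by (intro sum_mono member_le_sum) auto

lemma trace_conj_diag:
  fixes P :: "real^'n^'n"
  assumes "orthogonal_matrix P"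
  shows "trace (P ** diag_mat lam ** transpose P) = (\<Sum>j\<in>UNIV. lam j)"
  unfolding trace_orthogonal_conj[OF assms] trace_diag_mat ..

lemma frob_sq_conj_diag_minus_id:
  fixes P :: "real^'n^'n"
  assumes P: "orthogonal_matrix P"
  shows "frob_sq (P ** diag_mat lam ** transpose P - mat 1) = (\<Sum>j\<in>UNIV. (lam j - 1)\<^sup>2)"
proof -
  have "mat 1 = P ** diag_mat (\<lambda>_. 1) ** transpose P"
    using P by (simp add: diag_mat_one orthogonal_matrix_def)
  then have "P ** diag_mat lam ** transpose P - mat 1 = P ** diag_mat (\<lambda>j. lam j - 1) ** transpose P"
    by (simp only: matrix_diff_ldistrib[symmetric] matrix_diff_rdistrib[symmetric] diag_mat_diff)
  then show ?thesis
    by (simp add: frob_sq_orthogonal_conj[OF P] frob_sq_diag_mat)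
qed

lemma ln_det_conj_diag:
  fixes P :: "real^'n^'n"
  assumes P: "orthogonal_matrix P" and lam: "\<And>j. 0 < lam j"
  shows "ln (det (P ** diag_mat lam ** transpose P)) = (\<Sum>j\<in>UNIV. ln (lam j))"
  unfolding det_orthogonal_conj[OF P] det_diag_mat
  using lam by (simp add: ln_prod less_imp_neq[symmetric])

lemma rayleigh_conj_diag_le:
  fixes P :: "real^'n^'n"
  assumes P: "orthogonal_matrix P" and L: "\<And>j. lam j \<le> L" and u: "norm u = 1"
  shows "u \<bullet> ((P ** diag_mat lam ** transpose P) *v u) \<le> L"
proof -
  define w where "w = transpose P *v u"
  have "(\<Sum>j\<in>UNIV. lam j * (w $ j)\<^sup>2) \<le> (\<Sum>j\<in>UNIV. L * (w $ j)\<^sup>2)"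
    using L by (auto intro!: sum_mono mult_right_mono)
  also have "\<dots> = L"
    using norm_transpose_orthogonal_mult[OF P, of u] u
    by (simp add: w_def norm_eq_1 inner_vec_def power2_eq_square flip: sum_distrib_left)
  finally show ?thesis
    unfolding inner_orthogonal_conj inner_diag_mat w_def .
qed

section \<open>Symmetric positive definite matrices\<close>

lemma mat_eigenvalues_diag_mat: "mat_eigenvalues (diag_mat l) = range l"
proof
  show "range l \<subseteq> mat_eigenvalues (diag_mat l)"
  proof
    fix t assume "t \<in> range l"
    then obtain j where t: "t = l j" by blast
    have "diag_mat l *v axis j 1 = t *\<^sub>R axis j 1"
      unfolding t by (simp add: diag_mat_vector_mult vec_eq_iff axis_def)
    moreover have "axis j (1::real) \<noteq> 0" by (simp add: axis_eq_0_iff)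
    ultimately show "t \<in> mat_eigenvalues (diag_mat l)"
      unfolding mat_eigenvalues_def by blast
  qed
  show "mat_eigenvalues (diag_mat l) \<subseteq> range l"
  proof
    fix t assume "t \<in> mat_eigenvalues (diag_mat l)"
    then obtain v where "v \<noteq> 0" and v: "diag_mat l *v v = t *\<^sub>R v"
      unfolding mat_eigenvalues_def by blast
    then obtain i where "v $ i \<noteq> 0" by (auto simp: vec_eq_iff)
    moreover have "l i * v $ i = t * v $ i"
      using v by (simp add: diag_mat_vector_mult vec_eq_iff)
    ultimately have "t = l i" by simp
    then show "t \<in> range l" by blast
  qed
qed

lemma mat_eigenvalues_orthogonal_conj:
  fixes P X :: "real^'n^'n"
  assumes P: "orthogonal_matrix P"
  shows "mat_eigenvalues (P ** X ** transpose P) = mat_eigenvalues X"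
proof -
  have conj: "(P ** X ** transpose P) *v v = P *v (X *v (transpose P *v v))" for v
    by (simp only: matrix_vector_mul_assoc matrix_mul_assoc)
  have nz: "Q *v v \<noteq> 0" if "orthogonal_matrix Q" "v \<noteq> 0" for Q :: "real^'n^'n" and v
    using that norm_transpose_orthogonal_mult[of "transpose Q" v] by auto
  show ?thesis
  proof
    show "mat_eigenvalues (P ** X ** transpose P) \<subseteq> mat_eigenvalues X"
    proof
      fix t assume "t \<in> mat_eigenvalues (P ** X ** transpose P)"
      then obtain v where "v \<noteq> 0" and v: "(P ** X ** transpose P) *v v = t *\<^sub>R v"
        unfolding mat_eigenvalues_def by blast
      have "X *v (transpose P *v v) = transpose P *v ((P ** X ** transpose P) *v v)"
        unfolding conj orthogonal_matrix_transpose_mult_cancel[OF P] ..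
      also have "\<dots> = t *\<^sub>R (transpose P *v v)"
        by (simp only: v matrix_vector_mult_scaleR)
      finally show "t \<in> mat_eigenvalues X"
        using nz[of "transpose P" v] P \<open>v \<noteq> 0\<close> unfolding mat_eigenvalues_def by auto
    qed
    show "mat_eigenvalues X \<subseteq> mat_eigenvalues (P ** X ** transpose P)"
    proof
      fix t assume "t \<in> mat_eigenvalues X"
      then obtain w where "w \<noteq> 0" and w: "X *v w = t *\<^sub>R w"
        unfolding mat_eigenvalues_def by blast
      have "(P ** X ** transpose P) *v (P *v w) = t *\<^sub>R (P *v w)"
        unfolding conj orthogonal_matrix_transpose_mult_cancel[OF P] w
        by (simp only: matrix_vector_mult_scaleR)
      then show "t \<in> mat_eigenvalues (P ** X ** transpose P)"
        using nz[OF P \<open>w \<noteq> 0\<close>] unfolding mat_eigenvalues_def by blast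
    qed
  qed
qed

lemma cond_number_conj_inverse_diag:
  fixes P :: "real^'n^'n"
  assumes P: "orthogonal_matrix P" and lam: "\<And>j. 0 < lam j"
  shows "cond_number (P ** diag_mat (\<lambda>j. 1 / lam j) ** transpose P) = Max (range lam) / Min (range lam)"
proof -
  have fin: "finite (range lam)" by simp
  obtain a where a: "lam a = Min (range lam)" using Min_in[OF fin] by (metis rangeE UNIV_not_empty image_is_empty)
  obtain b where b: "lam b = Max (range lam)" using Max_in[OF fin] by (metis rangeE UNIV_not_empty image_is_empty)
  have "lam a \<le> lam j" "lam j \<le> lam b" for j unfolding a b by simp_all
  then have "Max (range (\<lambda>j. 1 / lam j)) = 1 / lam a" "Min (range (\<lambda>j. 1 / lam j)) = 1 / lam b"
    using lam by (auto intro!: Max_eqI Min_eqI simp: frac_le)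
  then show ?thesis
    unfolding cond_number_def mat_eigenvalues_orthogonal_conj[OF P] mat_eigenvalues_diag_mat a b
    using lam[of a] lam[of b] by simp
qed

lemma sym_pos_def_diagonalization:
  fixes S :: "real^'n^'n"
  assumes "sym_pos_def S"
  obtains P lam where "orthogonal_matrix P" "\<And>j. 0 < lam j"
    "S = P ** diag_mat (\<lambda>j. 1 / lam j) ** transpose P"
    "matrix_inv S = P ** diag_mat lam ** transpose P"
proof -
  have sym: "transpose S = S" and pos: "\<And>x. x \<noteq> 0 \<Longrightarrow> 0 < x \<bullet> (S *v x)"
    using assms by (auto simp: sym_pos_def_def)
  obtain P mu where P: "orthogonal_matrix P" and S: "S = P ** diag_mat mu ** transpose P"
    using symmetric_matrix_diagonalization[OF sym] by blast
  have mu: "0 < mu j" for j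
  proof -
    have "P *v axis j 1 \<noteq> 0"
      using norm_transpose_orthogonal_mult[of "transpose P" "axis j 1"] P by auto
    then have "0 < (P *v axis j 1) \<bullet> (S *v (P *v axis j 1))" by (rule pos)
    then show ?thesis
      unfolding S inner_orthogonal_conj orthogonal_matrix_transpose_mult_cancel[OF P]
        inner_diag_mat_axis .
  qed
  have "S ** (P ** diag_mat (\<lambda>j. 1 / mu j) ** transpose P) = mat 1"
    using mu P unfolding S orthogonal_conj_mult[OF P] diag_mat_mult
    by (simp add: diag_mat_one orthogonal_matrix_def less_imp_neq[symmetric])
  then have "matrix_inv S = P ** diag_mat (\<lambda>j. 1 / mu j) ** transpose P"
    by (rule matrix_inv_eqI)
  with P mu S show ?thesis
    using that[of P "\<lambda>j. 1 / mu j"] by simp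
qed

lemma sym_pos_def_det_pos:
  fixes S :: "real^'n^'n"
  assumes "sym_pos_def S"
  shows "0 < det S"
proof -
  obtain P lam where P: "orthogonal_matrix P" and lam: "\<And>j. 0 < lam j"
    and S: "S = P ** diag_mat (\<lambda>j. 1 / lam j) ** transpose P"
    using sym_pos_def_diagonalization[OF assms] by metis
  show ?thesis
    unfolding S det_orthogonal_conj[OF P] det_diag_mat using lam by (simp add: prod_pos)
qed

lemma sym_pos_def_mult_matrix_inv:
  fixes S :: "real^'n^'n"
  assumes "sym_pos_def S"
  shows "S ** matrix_inv S = mat 1"
proof -
  obtain P lam where P: "orthogonal_matrix P" and lam: "\<And>j. 0 < lam j"
    and S: "S = P ** diag_mat (\<lambda>j. 1 / lam j) ** transpose P"
    and A: "matrix_inv S = P ** diag_mat lam ** transpose P"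
    using sym_pos_def_diagonalization[OF assms] by metis
  show ?thesis
    using lam P unfolding A unfolding S orthogonal_conj_mult[OF P] diag_mat_mult
    by (simp add: diag_mat_one orthogonal_matrix_def less_imp_neq[symmetric])
qed

lemma sym_pos_def_matrix_inv:
  fixes S :: "real^'n^'n"
  assumes "sym_pos_def S"
  shows "sym_pos_def (matrix_inv S)"
proof -
  obtain P lam where P: "orthogonal_matrix P" and lam: "\<And>j. 0 < lam j"
    and A: "matrix_inv S = P ** diag_mat lam ** transpose P"
    using sym_pos_def_diagonalization[OF assms] by metis
  have "0 < x \<bullet> (matrix_inv S *v x)" if "x \<noteq> 0" for x
  proof -
    define w where "w = transpose P *v x"
    have "w \<noteq> 0"
      using norm_transpose_orthogonal_mult[OF P, of x] that by (auto simp: w_def)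
    then obtain j where j: "w $ j \<noteq> 0" by (auto simp: vec_eq_iff)
    have "0 < (\<Sum>j\<in>UNIV. lam j * (w $ j)\<^sup>2)"
      by (rule sum_pos2[where i = j])
        (use lam j in \<open>auto intro: mult_pos_pos mult_nonneg_nonneg less_imp_le[OF lam]\<close>)
    then show ?thesis
      unfolding A inner_orthogonal_conj inner_diag_mat w_def .
  qed
  moreover have "transpose (matrix_inv S) = matrix_inv S"
    unfolding A transpose_matrix_conj transpose_diag_mat ..
  ultimately show ?thesis
    unfolding sym_pos_def_def by blast
qed

lemma ln_det_matrix_inv:
  fixes S :: "real^'n^'n"
  assumes "sym_pos_def S"
  shows "ln (det (matrix_inv S)) = - ln (det S)"
proof -
  have "det S * det (matrix_inv S) = 1"
    using sym_pos_def_mult_matrix_inv[OF assms] by (simp flip: det_mul)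
  then have "det (matrix_inv S) = inverse (det S)"
    by (rule inverse_unique[symmetric])
  then show ?thesis
    using sym_pos_def_det_pos[OF assms] by (simp add: ln_inverse)
qed

lemma sym_pos_def_inverse_spectrum:
  fixes Sigma :: "real^'n^'n"
  assumes "sym_pos_def Sigma"
  obtains P lam l L where "orthogonal_matrix P" "matrix_inv Sigma = P ** diag_mat lam ** transpose P"
    "\<And>j. 0 < lam j" "0 < l" "\<And>j. l \<le> lam j" "\<And>j. lam j \<le> L" "cond_number Sigma = L / l"
proof -
  obtain P lam where P: "orthogonal_matrix P" and lam: "\<And>j. 0 < lam j"
    and Sigma: "Sigma = P ** diag_mat (\<lambda>j. 1 / lam j) ** transpose P"
    and A: "matrix_inv Sigma = P ** diag_mat lam ** transpose P"
    using sym_pos_def_diagonalization[OF assms] by metis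
  have "Min (range lam) \<in> range lam"
    by (auto intro!: Min_in)
  then have "0 < Min (range lam)"
    using lam by auto
  moreover have "Min (range lam) \<le> lam j" "lam j \<le> Max (range lam)" for j
    by simp_all
  moreover have "cond_number Sigma = Max (range lam) / Min (range lam)"
    unfolding Sigma by (rule cond_number_conj_inverse_diag[OF P lam])
  ultimately show ?thesis
    using that[OF P A lam] by blast
qed

section \<open>Quadratic bounds for the logarithm\<close>

lemma DERIV_factor_nonneg_imp_le:
  fixes f h :: "real \<Rightarrow> real"
  assumes deriv: "\<And>t. min c y \<le> t \<Longrightarrow> t \<le> max c y \<Longrightarrow> (f has_real_derivative (t - c) * h t) (at t)"
    and nonneg: "\<And>t. min c y \<le> t \<Longrightarrow> t \<le> max c y \<Longrightarrow> 0 \<le> h t"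
  shows "f c \<le> f y"
proof (cases "y \<le> c")
  case True
  show ?thesis
  proof (rule DERIV_nonpos_imp_nonincreasing[of y c, OF True])
    fix t assume "y \<le> t" "t \<le> c"
    then show "\<exists>D. (f has_real_derivative D) (at t) \<and> D \<le> 0"
      using True deriv[of t] nonneg[of t] by (auto intro!: mult_nonpos_nonneg)
  qed
next
  case False
  show ?thesis
  proof (rule DERIV_nonneg_imp_nondecreasing[of c y])
    show "c \<le> y" using False by simp
    fix t assume "c \<le> t" "t \<le> y"
    then show "\<exists>D. (f has_real_derivative D) (at t) \<and> 0 \<le> D"
      using False deriv[of t] nonneg[of t] by auto
  qed
qed

lemma ln_le_quadratic:
  fixes y L :: real
  assumes y: "0 < y" "y \<le> L" and L: "1 \<le> L"
  shows "ln y \<le> (y - 1) - (y - 1)\<^sup>2 / (2 * L\<^sup>2)"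
proof -
  define f where "f t = (t - 1) - (t - 1)\<^sup>2 / (2 * L\<^sup>2) - ln t" for t
  have "f 1 \<le> f y"
  proof (rule DERIV_factor_nonneg_imp_le[where f = f and c = 1 and y = y and h = "\<lambda>t. 1 / t - 1 / L\<^sup>2"])
    fix t assume t: "min 1 y \<le> t" "t \<le> max 1 y"
    then have "0 < t" using y by simp
    show "(f has_real_derivative (t - 1) * (1 / t - 1 / L\<^sup>2)) (at t)"
      unfolding f_def using \<open>0 < t\<close> L
      by (auto intro!: derivative_eq_intros simp: power2_eq_square field_simps)
    have "t \<le> L" using t y L by simp
    also have "L \<le> L\<^sup>2" using mult_right_mono[OF L, of L] L by (simp add: power2_eq_square)
    finally have "t \<le> L\<^sup>2" .
    then show "0 \<le> 1 / t - 1 / L\<^sup>2"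
      using \<open>0 < t\<close> by (simp add: frac_le)
  qed
  then show ?thesis by (simp add: f_def)
qed

lemma ln_ge_quadratic:
  fixes y l :: real
  assumes y: "l \<le> y" and l: "0 < l" "l \<le> 1"
  shows "(y - 1) - (y - 1)\<^sup>2 / (2 * l\<^sup>2) \<le> ln y"
proof -
  define f where "f t = ln t - (t - 1) + (t - 1)\<^sup>2 / (2 * l\<^sup>2)" for t
  have "f 1 \<le> f y"
  proof (rule DERIV_factor_nonneg_imp_le[where f = f and c = 1 and y = y and h = "\<lambda>t. 1 / l\<^sup>2 - 1 / t"])
    fix t assume t: "min 1 y \<le> t" "t \<le> max 1 y"
    then have "0 < t" using y l by simp
    show "(f has_real_derivative (t - 1) * (1 / l\<^sup>2 - 1 / t)) (at t)"
      unfolding f_def using \<open>0 < t\<close> l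
      by (auto intro!: derivative_eq_intros simp: power2_eq_square field_simps)
    have "l\<^sup>2 \<le> l" using mult_left_mono[OF l(2), of l] l(1) by (simp add: power2_eq_square)
    also have "l \<le> t" using t y l by simp
    finally have "l\<^sup>2 \<le> t" .
    then show "0 \<le> 1 / l\<^sup>2 - 1 / t"
      using l by (simp add: frac_le)
  qed
  then show ?thesis by (simp add: f_def)
qed

lemma frob_sq_le_neg_ln_det:
  fixes A P :: "real^'n^'n"
  assumes P: "orthogonal_matrix P" and A: "A = P ** diag_mat lam ** transpose P"
    and tr: "trace A = real CARD('n)" and lam: "\<And>j. 0 < lam j" and L: "\<And>j. lam j \<le> L"
  shows "frob_sq (A - mat 1) / (2 * L\<^sup>2) \<le> - ln (det A)"
proof -
  have sum_lam: "(\<Sum>j\<in>UNIV. lam j) = real CARD('n)"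
    using tr unfolding A trace_conj_diag[OF P] .
  have "real CARD('n) \<le> real CARD('n) * L"
    using sum_mono[of UNIV lam "\<lambda>_. L"] L sum_lam by (simp add: mult.commute)
  then have "1 \<le> L" by simp
  have "(\<Sum>j\<in>UNIV. ln (lam j)) \<le> (\<Sum>j\<in>UNIV. (lam j - 1) - (lam j - 1)\<^sup>2 / (2 * L\<^sup>2))"
    using lam L \<open>1 \<le> L\<close> by (intro sum_mono ln_le_quadratic)
  then show ?thesis
    unfolding A frob_sq_conj_diag_minus_id[OF P] ln_det_conj_diag[OF P lam]
    by (simp add: sum_subtractf sum_lam sum_divide_distrib)
qed

lemma neg_ln_det_le_frob_sq:
  fixes A P :: "real^'n^'n"
  assumes P: "orthogonal_matrix P" and A: "A = P ** diag_mat lam ** transpose P"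
    and tr: "trace A = real CARD('n)" and l: "0 < l" "\<And>j. l \<le> lam j"
  shows "- ln (det A) \<le> frob_sq (A - mat 1) / (2 * l\<^sup>2)"
proof -
  have sum_lam: "(\<Sum>j\<in>UNIV. lam j) = real CARD('n)"
    using tr unfolding A trace_conj_diag[OF P] .
  have "real CARD('n) * l \<le> real CARD('n)"
    using sum_mono[of UNIV "\<lambda>_. l" lam] l sum_lam by (simp add: mult.commute)
  then have "l \<le> 1" by simp
  have lam: "0 < lam j" for j
    using l(1) l(2)[of j] by linarith
  have "(\<Sum>j\<in>UNIV. (lam j - 1) - (lam j - 1)\<^sup>2 / (2 * l\<^sup>2)) \<le> (\<Sum>j\<in>UNIV. ln (lam j))"
    using l \<open>l \<le> 1\<close> by (intro sum_mono ln_ge_quadratic)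
  then show ?thesis
    unfolding A frob_sq_conj_diag_minus_id[OF P] ln_det_conj_diag[OF P lam]
    by (simp add: sum_subtractf sum_lam sum_divide_distrib)
qed

section \<open>Haar measure on the orthogonal group\<close>

lemma haar_orthogonalD:
  fixes M :: "(real^'n^'n) measure"
  assumes "haar_orthogonal M"
  shows "prob_space M" and "sets M = sets borel" and "space M = UNIV"
    and "AE R in M. orthogonal_matrix R"
    and "\<And>Q. orthogonal_matrix Q \<Longrightarrow> distr M M ((**) Q) = M"
proof -
  show p: "prob_space M" and s: "sets M = sets borel"
    and "\<And>Q. orthogonal_matrix Q \<Longrightarrow> distr M M ((**) Q) = M"
    using assms by (auto simp: haar_orthogonal_def)
  show "space M = UNIV"
    using sets_eq_imp_space_eq[OF s] by simp
  have "measure M {R. orthogonal_matrix R} = 1"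
    using assms by (simp add: haar_orthogonal_def)
  then show "AE R in M. orthogonal_matrix R"
    using prob_space.AE_prob_1[OF p, of "{R. orthogonal_matrix R}"] by simp
qed

lemma compact_orthogonal_matrices: "compact {R :: real^'n^'n. orthogonal_matrix R}"
  unfolding compact_eq_bounded_closed
proof
  show "bounded {R :: real^'n^'n. orthogonal_matrix R}"
    unfolding bounded_iff
  proof (intro exI ballI)
    fix R :: "real^'n^'n" assume "R \<in> {R. orthogonal_matrix R}"
    then have "norm (R $ i) = 1" for i
      by (simp add: orthogonal_matrix_orthonormal_rows row_def vec_lambda_eta)
    then have "norm R = L2_set (\<lambda>_. 1) (UNIV :: 'n set)"
      unfolding norm_vec_def by (intro L2_set_cong) auto
    then show "norm R \<le> sqrt (real CARD('n))" by (simp add: L2_set_constant)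
  qed
  have "{R :: real^'n^'n. orthogonal_matrix R} = {R. transpose R ** R = mat 1}"
    by (simp add: orthogonal_matrix)
  moreover have "closed {R :: real^'n^'n. transpose R ** R = mat 1}"
    by (rule closed_Collect_eq)
      (auto simp: matrix_matrix_mult_def transpose_def intro!: continuous_intros)
  ultimately show "closed {R :: real^'n^'n. orthogonal_matrix R}" by simp
qed

lemma haar_measurable_continuous:
  fixes f :: "real^'n^'n \<Rightarrow> real"
  assumes "haar_orthogonal M" and "continuous_on UNIV f"
  shows "f \<in> borel_measurable M"
proof -
  have "(borel_measurable M :: (real^'n^'n \<Rightarrow> real) set) = borel_measurable borel"
    by (rule measurable_cong_sets[OF haar_orthogonalD(2)[OF assms(1)] refl])
  then show ?thesis
    using borel_measurable_continuous_onI[OF assms(2)] by simp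
qed

lemma haar_integrable_continuous:
  fixes f :: "real^'n^'n \<Rightarrow> real"
  assumes H: "haar_orthogonal M" and f: "continuous_on UNIV f"
  shows "integrable M f"
proof -
  interpret prob_space M by (rule haar_orthogonalD(1)[OF H])
  have "compact (f ` {R. orthogonal_matrix R})"
    using compact_continuous_image[OF continuous_on_subset[OF f] compact_orthogonal_matrices]
    by simp
  then obtain B where B: "\<And>y. y \<in> f ` {R. orthogonal_matrix R} \<Longrightarrow> norm y \<le> B"
    using compact_imp_bounded bounded_iff by metis
  have "AE R in M. norm (f R) \<le> B"
    using haar_orthogonalD(4)[OF H] B by (auto elim!: AE_mp)
  then show ?thesis
    by (rule integrable_const_bound) (rule haar_measurable_continuous[OF H f])
qed

lemma haar_integral_left_invariant:
  fixes f :: "real^'n^'n \<Rightarrow> real"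
  assumes H: "haar_orthogonal M" and Q: "orthogonal_matrix Q" and f: "continuous_on UNIV f"
  shows "(\<integral>R. f R \<partial>M) = (\<integral>R. f (Q ** R) \<partial>M)"
proof -
  have "continuous_on UNIV ((**) Q)"
    by (auto simp: matrix_matrix_mult_def intro!: continuous_intros)
  moreover have "measurable M M = measurable borel (borel :: (real^'n^'n) measure)"
    by (rule measurable_cong_sets[OF haar_orthogonalD(2)[OF H] haar_orthogonalD(2)[OF H]])
  ultimately have "(**) Q \<in> measurable M M"
    using borel_measurable_continuous_onI by blast
  then have "(\<integral>R. f R \<partial>distr M M ((**) Q)) = (\<integral>R. f (Q ** R) \<partial>M)"
    by (rule integral_distr) (rule haar_measurable_continuous[OF H f])
  then show ?thesis
    using haar_orthogonalD(5)[OF H Q] by simp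
qed

lemma continuous_on_conj_entry:
  "continuous_on UNIV (\<lambda>R :: real^'n^'n. (R ** C ** transpose R) $ i $ k)"
  by (simp add: matrix_matrix_mult_def transpose_def continuous_on_sum continuous_intros)

definition rot45 :: "'n::finite \<Rightarrow> 'n \<Rightarrow> real \<Rightarrow> real^'n^'n" where
  "rot45 i k \<sigma> = (\<chi> a. if a = i then (axis i 1 + \<sigma> *\<^sub>R axis k 1) /\<^sub>R sqrt 2
                       else if a = k then (axis k 1 - \<sigma> *\<^sub>R axis i 1) /\<^sub>R sqrt 2
                       else axis a 1)"

lemma orthogonal_rot45:
  assumes ik: "i \<noteq> k" and \<sigma>: "\<sigma>\<^sup>2 = 1"
  shows "orthogonal_matrix (rot45 i k \<sigma>)"
proof -
  have \<sigma>\<sigma>: "\<sigma> * (\<sigma> * c) = c" for c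
    using \<sigma> by (simp add: power2_eq_square flip: mult.assoc)
  have half: "inverse (sqrt 2) * inverse (sqrt 2) = (1 / 2 :: real)"
    by (simp flip: inverse_mult_distrib)
  have "rot45 i k \<sigma> ** mat 1 ** transpose (rot45 i k \<sigma>) = mat 1"
    unfolding vec_eq_iff matrix_conj_entry matrix_vector_mul_lid
    using ik by (auto simp: rot45_def inner_axis_axis inner_add_left inner_add_right
        inner_diff_left inner_diff_right mat_def \<sigma>[unfolded power2_eq_square] \<sigma>\<sigma> half algebra_simps)
  then show ?thesis
    by (simp add: orthogonal_matrix_def matrix_left_right_inverse)
qed

lemma rot45_conj_diag:
  fixes X :: "real^'n^'n"
  assumes ik: "i \<noteq> k" and \<sigma>: "\<sigma>\<^sup>2 = 1" and sym: "transpose X = X"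
  shows "(rot45 i k \<sigma> ** X ** transpose (rot45 i k \<sigma>)) $ i $ i
           = (X $ i $ i + X $ k $ k) / 2 + \<sigma> * X $ i $ k"
proof -
  have entry: "axis a 1 \<bullet> (X *v axis b 1) = X $ a $ b" for a b
    by (simp add: matrix_vector_mult_basis column_def inner_axis')
  have X: "X $ k $ i = X $ i $ k"
    using sym by (metis transpose_def vec_lambda_beta)
  have inv2: "inverse (sqrt 2) * inverse (sqrt 2) = (1 / 2 :: real)"
    by (simp flip: inverse_mult_distrib)
  have half: "inverse (sqrt 2) * (inverse (sqrt 2) * c) = c / 2" for c :: real
    by (subst mult.assoc[symmetric]) (simp add: inv2)
  have \<sigma>\<sigma>: "\<sigma> * (\<sigma> * c) = c" for c
    using \<sigma> by (simp add: power2_eq_square flip: mult.assoc)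
  show ?thesis
    unfolding matrix_conj_entry
    by (simp add: rot45_def matrix_vector_right_distrib inner_add_left inner_add_right
        entry X half \<sigma>\<sigma> algebra_simps)
qed

text \<open>
  The rotations by \<plusminus>45 degrees in the (i, k)-plane send the diagonal entry i of R C R^T to the
  mean of the diagonal entries i and k plus or minus the entry (i, k); averaging the two
  rotated copies cancels the cross term.
\<close>

lemma haar_conj_diag_sq_pair:
  fixes C :: "real^'n^'n"
  assumes H: "haar_orthogonal M" and sym: "transpose C = C" and ik: "i \<noteq> k"
  shows "(\<integral>R. ((R ** C ** transpose R) $ i $ i)\<^sup>2 \<partial>M)
       = (\<integral>R. (((R ** C ** transpose R) $ i $ i + (R ** C ** transpose R) $ k $ k) / 2)\<^sup>2
               + ((R ** C ** transpose R) $ i $ k)\<^sup>2 \<partial>M)"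
proof -
  define X where "X R = R ** C ** transpose R" for R :: "real^'n^'n"
  define u where "u R = (X R $ i $ i + X R $ k $ k) / 2" for R
  define v where "v R = X R $ i $ k" for R
  have cont: "continuous_on UNIV (\<lambda>R. X R $ a $ b)" for a b
    unfolding X_def by (rule continuous_on_conj_entry)
  have cont_u: "continuous_on UNIV u"
    unfolding u_def by (intro continuous_on_divide continuous_on_add cont continuous_on_const) auto
  have cont_v: "continuous_on UNIV v"
    unfolding v_def by (rule cont)
  have int: "integrable M (\<lambda>R. (u R + \<sigma> * v R)\<^sup>2)" for \<sigma>
    by (intro haar_integrable_continuous[OF H] continuous_on_power continuous_on_add
        continuous_on_mult continuous_on_const cont_u cont_v)
  have rotated: "(\<integral>R. (X R $ i $ i)\<^sup>2 \<partial>M) = (\<integral>R. (u R + \<sigma> * v R)\<^sup>2 \<partial>M)" if \<sigma>: "\<sigma>\<^sup>2 = 1" for \<sigma>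
  proof -
    let ?Q = "rot45 i k \<sigma>"
    have "X (?Q ** R) = ?Q ** X R ** transpose ?Q" for R
      by (simp add: X_def matrix_transpose_mul matrix_mul_assoc)
    then have "(\<lambda>R. (X (?Q ** R) $ i $ i)\<^sup>2) = (\<lambda>R. (u R + \<sigma> * v R)\<^sup>2)"
      using rot45_conj_diag[OF ik \<sigma>] sym
      by (simp add: X_def u_def v_def transpose_matrix_conj)
    moreover have "(\<integral>R. (X R $ i $ i)\<^sup>2 \<partial>M) = (\<integral>R. (X (?Q ** R) $ i $ i)\<^sup>2 \<partial>M)"
      using haar_integral_left_invariant[OF H orthogonal_rot45[OF ik \<sigma>]] cont
      by (simp add: continuous_on_power)
    ultimately show ?thesis by simp
  qed
  have "2 * (\<integral>R. (X R $ i $ i)\<^sup>2 \<partial>M) = (\<integral>R. (u R + v R)\<^sup>2 + (u R + (-1) * v R)\<^sup>2 \<partial>M)"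
    using rotated[of 1] rotated[of "-1"] int[of 1] int[of "-1"] by simp
  also have "\<dots> = (\<integral>R. 2 * ((u R)\<^sup>2 + (v R)\<^sup>2) \<partial>M)"
    by (rule Bochner_Integration.integral_cong) (simp_all add: power2_eq_square algebra_simps)
  also have "\<dots> = 2 * (\<integral>R. (u R)\<^sup>2 + (v R)\<^sup>2 \<partial>M)"
    by (rule integral_mult_right_zero)
  finally show ?thesis
    unfolding X_def u_def v_def by simp
qed

lemma sum_off_diagonal_identity:
  fixes X :: "real^'n^'n"
  assumes "trace X = 0"
  shows "(\<Sum>i\<in>UNIV. \<Sum>k\<in>UNIV. if i = k then 0
             else (X $ i $ i)\<^sup>2 - ((X $ i $ i + X $ k $ k) / 2)\<^sup>2 - (X $ i $ k)\<^sup>2)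
       = (real CARD('n) + 2) / 2 * (\<Sum>i\<in>UNIV. (X $ i $ i)\<^sup>2) - frob_sq X"
proof -
  define a where "a i = X $ i $ i" for i
  define P where "P = (\<Sum>i\<in>UNIV. (a i)\<^sup>2)"
  define g where "g i k = (a i)\<^sup>2 - ((a i + a k) / 2)\<^sup>2 - (X $ i $ k)\<^sup>2" for i k
  have g: "g i k = 3/4 * (a i)\<^sup>2 - 1/2 * (a i * a k) - 1/4 * (a k)\<^sup>2 - (X $ i $ k)\<^sup>2" for i k
    by (simp add: g_def power2_eq_square field_simps)
  have "(\<Sum>k\<in>UNIV. if i = k then 0 else g i k) = (\<Sum>k\<in>UNIV. g i k - (if k = i then g i i else 0))"
    for i by (intro sum.cong) auto
  then have "(\<Sum>i\<in>UNIV. \<Sum>k\<in>UNIV. if i = k then 0 else g i k)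
      = (\<Sum>i\<in>UNIV. \<Sum>k\<in>UNIV. g i k) - (\<Sum>i\<in>UNIV. g i i)"
    by (simp add: sum_subtractf)
  also have "(\<Sum>i\<in>UNIV. g i i) = - P"
    by (simp add: g_def P_def a_def power2_eq_square sum_negf)
  also have "(\<Sum>i\<in>UNIV. \<Sum>k\<in>UNIV. g i k)
      = 3/4 * (\<Sum>i\<in>UNIV. \<Sum>k\<in>(UNIV :: 'n set). (a i)\<^sup>2) - 1/2 * (\<Sum>i\<in>UNIV. \<Sum>k\<in>UNIV. a i * a k)
        - 1/4 * (\<Sum>i\<in>(UNIV :: 'n set). \<Sum>k\<in>UNIV. (a k)\<^sup>2) - frob_sq X"
    by (simp only: g sum_subtractf sum_distrib_left[symmetric] frob_sq_def)
  also have "(\<Sum>i\<in>UNIV. \<Sum>k\<in>(UNIV :: 'n set). (a i)\<^sup>2) = real CARD('n) * P"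
    by (simp add: P_def sum_distrib_left)
  also have "(\<Sum>i\<in>(UNIV :: 'n set). \<Sum>k\<in>UNIV. (a k)\<^sup>2) = real CARD('n) * P"
    by (simp add: P_def)
  also have "(\<Sum>i\<in>UNIV. \<Sum>k\<in>UNIV. a i * a k) = 0"
    using assms by (simp add: a_def trace_def flip: sum_product)
  finally show ?thesis
    unfolding g_def a_def P_def by (simp add: algebra_simps)
qed

lemma haar_conj_diag_sq_expectation:
  fixes C :: "real^'n^'n"
  assumes H: "haar_orthogonal M" and sym: "transpose C = C" and tr: "trace C = 0"
  shows "(\<integral>R. (\<Sum>i\<in>UNIV. ((R ** C ** transpose R) $ i $ i)\<^sup>2) \<partial>M)
       = 2 * frob_sq C / (real CARD('n) + 2)"
proof -
  interpret prob_space M by (rule haar_orthogonalD(1)[OF H])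
  define X where "X R = R ** C ** transpose R" for R :: "real^'n^'n"
  define P where "P R = (\<Sum>i\<in>UNIV. (X R $ i $ i)\<^sup>2)" for R
  define g where "g i k R = (if i = k then 0
      else (X R $ i $ i)\<^sup>2 - ((X R $ i $ i + X R $ k $ k) / 2)\<^sup>2 - (X R $ i $ k)\<^sup>2)" for i k R
  have cont: "continuous_on UNIV (\<lambda>R. X R $ a $ b)" for a b
    unfolding X_def by (rule continuous_on_conj_entry)
  have int_sq: "integrable M (\<lambda>R. (X R $ a $ b)\<^sup>2)" for a b
    by (intro haar_integrable_continuous[OF H] continuous_on_power cont)
  have int_mid: "integrable M (\<lambda>R. ((X R $ a $ a + X R $ b $ b) / 2)\<^sup>2)" for a b
    by (intro haar_integrable_continuous[OF H] continuous_on_power continuous_on_divide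
        continuous_on_add cont continuous_on_const) auto
  have int_g: "integrable M (g i k)" for i k
    unfolding g_def using int_sq int_mid by (cases "i = k") auto
  have "(\<integral>R. g i k R \<partial>M) = 0" for i k
  proof (cases "i = k")
    case False
    then show ?thesis
      using haar_conj_diag_sq_pair[OF H sym False] int_sq int_mid
      by (simp add: g_def X_def)
  qed (simp add: g_def)
  then have "(\<integral>R. (\<Sum>i\<in>UNIV. \<Sum>k\<in>UNIV. g i k R) \<partial>M) = 0"
    using int_g by (simp add: integral_sum integrable_sum)
  moreover have ae: "AE R in M. (real CARD('n) + 2) / 2 * P R - frob_sq C
      = (\<Sum>i\<in>UNIV. \<Sum>k\<in>UNIV. g i k R)"
    using haar_orthogonalD(4)[OF H]
  proof eventually_elim
    case (elim R)
    have "trace (X R) = 0" using tr by (simp add: X_def trace_orthogonal_conj[OF elim])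
    from sum_off_diagonal_identity[OF this] show ?case
      unfolding g_def P_def by (simp add: X_def frob_sq_orthogonal_conj[OF elim])
  qed
  moreover have int_P: "integrable M P"
    unfolding P_def using int_sq by simp
  ultimately have "(\<integral>R. (real CARD('n) + 2) / 2 * P R - frob_sq C \<partial>M) = 0"
    using int_g by (subst integral_cong_AE[OF _ _ ae])
      (auto intro!: borel_measurable_integrable integrable_sum)
  then have "(real CARD('n) + 2) / 2 * (\<integral>R. P R \<partial>M) = frob_sq C"
    using int_P by (simp add: prob_space)
  then show ?thesis
    by (simp add: P_def X_def field_simps)
qed

section \<open>Gaussian densities and Kullback-Leibler divergence\<close>

lemma lborel_integral_prod_Basis:
  fixes h :: "'a::euclidean_space \<Rightarrow> real \<Rightarrow> real"
  assumes int: "\<And>b. b \<in> Basis \<Longrightarrow> integrable lborel (h b)"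
  shows "integrable lborel (\<lambda>x::'a. \<Prod>b\<in>Basis. h b (x \<bullet> b))"
    and "(\<integral>x. (\<Prod>b\<in>Basis. h b (x \<bullet> b)) \<partial>lborel) = (\<Prod>b\<in>Basis. \<integral>t. h b t \<partial>lborel)"
proof -
  interpret P: product_sigma_finite "\<lambda>_::'a. lborel :: real measure" by standard
  define \<phi> where "\<phi> g = (\<Sum>b\<in>Basis. g b *\<^sub>R b)" for g :: "'a \<Rightarrow> real"
  have \<phi>: "\<phi> \<in> measurable (\<Pi>\<^sub>M b\<in>Basis. lborel) borel"
    unfolding \<phi>_def by measurable
  have [measurable]: "h b \<in> borel_measurable borel" if "b \<in> Basis" for b
    using borel_measurable_integrable[OF int[OF that]] by simp
  have F: "(\<lambda>x::'a. \<Prod>b\<in>Basis. h b (x \<bullet> b)) \<in> borel_measurable borel"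
    by measurable
  have comp: "(\<Prod>b\<in>Basis. h b (\<phi> g \<bullet> b)) = (\<Prod>b\<in>Basis. h b (g b))" for g
    by (intro prod.cong refl)
      (simp add: \<phi>_def inner_sum_left inner_Basis if_distrib sum.delta cong: if_cong)
  have lborel: "lborel = distr (\<Pi>\<^sub>M b\<in>Basis. lborel) borel \<phi>"
    unfolding \<phi>_def by (rule lborel_eq)
  have "integrable (\<Pi>\<^sub>M b\<in>Basis. lborel) (\<lambda>g. \<Prod>b\<in>Basis. h b (g b))"
    by (rule P.product_integrable_prod) (auto intro: int)
  then show "integrable lborel (\<lambda>x::'a. \<Prod>b\<in>Basis. h b (x \<bullet> b))"
    unfolding lborel using integrable_distr_eq[OF \<phi> F] comp by simp
  have "(\<integral>x. (\<Prod>b\<in>Basis. h b (x \<bullet> b)) \<partial>lborel)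
      = (\<integral>g. (\<Prod>b\<in>Basis. h b (\<phi> g \<bullet> b)) \<partial>(\<Pi>\<^sub>M b\<in>Basis. lborel))"
    unfolding lborel by (rule integral_distr[OF \<phi> F])
  also have "\<dots> = (\<Prod>b\<in>Basis. \<integral>t. h b t \<partial>lborel)"
    unfolding comp by (rule P.product_integral_prod) (auto intro: int)
  finally show "(\<integral>x. (\<Prod>b\<in>Basis. h b (x \<bullet> b)) \<partial>lborel) = (\<Prod>b\<in>Basis. \<integral>t. h b t \<partial>lborel)" .
qed

lemma lborel_integral_prod_vec:
  fixes f :: "'n::finite \<Rightarrow> real \<Rightarrow> real"
  assumes int: "\<And>i. integrable lborel (f i)"
  shows "integrable lborel (\<lambda>x::real^'n. \<Prod>i\<in>UNIV. f i (x $ i))"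
    and "(\<integral>x. (\<Prod>i\<in>UNIV. f i (x $ i)) \<partial>lborel) = (\<Prod>i\<in>UNIV. \<integral>t. f i t \<partial>lborel)"
proof -
  define h where "h b = f (SOME i. b = axis i (1::real))" for b :: "real^'n"
  have h: "h (axis i 1) = f i" for i
    unfolding h_def by (rule arg_cong[where f = f], rule some_equality) (auto simp: axis_eq_axis)
  have Basis: "(Basis :: (real^'n) set) = (\<lambda>i. axis i 1) ` UNIV"
    by (auto simp: Basis_vec_def)
  have inj: "inj (\<lambda>i::'n. axis i (1::real))"
    by (auto simp: inj_def axis_eq_axis)
  have prod_Basis: "(\<Prod>b\<in>Basis. H b) = (\<Prod>i\<in>UNIV. H (axis i 1))" for H :: "real^'n \<Rightarrow> real"
    unfolding Basis by (simp add: prod.reindex[OF inj])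
  have eq: "(\<lambda>x::real^'n. \<Prod>i\<in>UNIV. f i (x $ i)) = (\<lambda>x. \<Prod>b\<in>Basis. h b (x \<bullet> b))"
    by (simp add: prod_Basis h inner_axis)
  have int_h: "integrable lborel (h b)" if "b \<in> Basis" for b :: "real^'n"
    using that int by (auto simp: Basis h)
  show "integrable lborel (\<lambda>x::real^'n. \<Prod>i\<in>UNIV. f i (x $ i))"
    unfolding eq by (rule lborel_integral_prod_Basis(1)[OF int_h])
  show "(\<integral>x. (\<Prod>i\<in>UNIV. f i (x $ i)) \<partial>lborel) = (\<Prod>i\<in>UNIV. \<integral>t. f i t \<partial>lborel)"
    using lborel_integral_prod_Basis(2)[of h, OF int_h] unfolding eq by (simp add: prod_Basis h)
qed

lemma KL_dens_eq_integral:
  fixes q p :: "'a::euclidean_space \<Rightarrow> real"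
  assumes int: "integrable lborel (\<lambda>x. q x * ln (q x / p x))"
  shows "KL_dens q p = ereal (\<integral>x. q x * ln (q x / p x) \<partial>lborel)"
proof -
  define f where "f x = q x * ln (q x / p x)" for x
  have pos: "(\<integral>\<^sup>+x. ennreal (f x) \<partial>lborel) = ennreal (\<integral>x. max (f x) 0 \<partial>lborel)"
    using int unfolding f_def[symmetric]
    by (subst nn_integral_eq_integral[symmetric]) (auto simp: ennreal_max_0)
  have neg: "(\<integral>\<^sup>+x. ennreal (- f x) \<partial>lborel) = ennreal (\<integral>x. max (- f x) 0 \<partial>lborel)"
    using int unfolding f_def[symmetric]
    by (subst nn_integral_eq_integral[symmetric]) (auto simp: ennreal_max_0)
  have "(\<integral>x. max (f x) 0 \<partial>lborel) - (\<integral>x. max (- f x) 0 \<partial>lborel)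
      = (\<integral>x. max (f x) 0 - max (- f x) 0 \<partial>lborel)"
    using int unfolding f_def[symmetric] by (intro Bochner_Integration.integral_diff[symmetric]) auto
  also have "(\<lambda>x. max (f x) 0 - max (- f x) 0) = f"
    by (auto simp: fun_eq_iff max_def)
  finally have "(\<integral>x. max (f x) 0 \<partial>lborel) - (\<integral>x. max (- f x) 0 \<partial>lborel) = (\<integral>x. f x \<partial>lborel)" .
  moreover have "0 \<le> (\<integral>x. max (f x) 0 \<partial>lborel)" "0 \<le> (\<integral>x. max (- f x) 0 \<partial>lborel)"
    by (auto intro: integral_nonneg_AE)
  ultimately show ?thesis
    unfolding KL_dens_def f_def[symmetric] pos neg by simp
qed

lemma normal_density_moment_le_2:
  assumes \<sigma>: "0 < \<sigma>" and m: "m \<le> 2"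
  shows "has_bochner_integral lborel (\<lambda>t. normal_density 0 \<sigma> t * t ^ m)
           (if m = 0 then 1 else if m = 1 then 0 else \<sigma>\<^sup>2)"
proof -
  have "has_bochner_integral lborel (normal_density 0 \<sigma>) 1"
    using \<sigma> by (simp add: has_bochner_integral_iff integrable_normal_density integral_normal_density)
  moreover have "has_bochner_integral lborel (\<lambda>t. normal_density 0 \<sigma> t * t) 0"
    using normal_moment_nz_1[OF \<sigma>, of 0] by simp
  moreover have "has_bochner_integral lborel (\<lambda>t. normal_density 0 \<sigma> t * t\<^sup>2) (\<sigma>\<^sup>2)"
    using normal_moment_even[OF \<sigma>, of 0 1] by (simp add: power2_eq_square field_simps)
  moreover have "m = 0 \<or> m = 1 \<or> m = 2" using m by auto
  ultimately show ?thesis by auto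
qed

lemma normal_density_C1:
  assumes \<sigma>: "0 < \<sigma>"
  shows "normal_density 0 \<sigma> C1_differentiable_on UNIV"
  unfolding C1_differentiable_on_def
proof (intro exI conjI ballI)
  fix t :: real
  have "(normal_density 0 \<sigma> has_real_derivative normal_density 0 \<sigma> t * (- t / \<sigma>\<^sup>2)) (at t)"
    unfolding normal_density_def[abs_def] using \<sigma>
    by (auto intro!: derivative_eq_intros simp: power2_eq_square field_simps)
  then show "(normal_density 0 \<sigma> has_vector_derivative normal_density 0 \<sigma> t * (- t / \<sigma>\<^sup>2)) (at t)"
    by (simp add: has_real_derivative_iff_has_vector_derivative)
next
  show "continuous_on UNIV (\<lambda>t. normal_density 0 \<sigma> t * (- t / \<sigma>\<^sup>2))"
    unfolding normal_density_def using \<sigma> by (intro continuous_intros) auto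
qed

lemma ln_normal_density:
  assumes "0 < \<sigma>"
  shows "ln (normal_density 0 \<sigma> t) = - ln (2 * pi) / 2 - ln \<sigma> - t\<^sup>2 / (2 * \<sigma>\<^sup>2)"
proof -
  have "ln (normal_density 0 \<sigma> t) = - t\<^sup>2 / (2 * \<sigma>\<^sup>2) - ln (2 * pi * \<sigma>\<^sup>2) / 2"
    using assms by (simp add: normal_density_def ln_div ln_sqrt)
  also have "ln (2 * pi * \<sigma>\<^sup>2) = ln (2 * pi) + 2 * ln \<sigma>"
    using assms by (simp add: ln_mult ln_realpow)
  finally show ?thesis by (simp add: field_simps)
qed

definition normal_prod_density :: "('n::finite \<Rightarrow> real) \<Rightarrow> real^'n \<Rightarrow> real" where
  "normal_prod_density s x = (\<Prod>i\<in>UNIV. normal_density 0 (s i) (x $ i))"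

lemma normal_prod_density_pos: "(\<And>i. 0 < s i) \<Longrightarrow> 0 < normal_prod_density s x"
  unfolding normal_prod_density_def by (intro prod_pos) (auto intro: normal_density_pos)

lemma normal_prod_density_in_prod_densities:
  assumes s: "\<And>i. 0 < s i"
  shows "normal_prod_density s \<in> prod_densities"
  unfolding prod_densities_def
proof (intro CollectI exI[of _ "\<lambda>i. normal_density 0 (s i)"] conjI allI)
  fix i t
  show "0 < normal_density 0 (s i) t" using s by (simp add: normal_density_pos)
  show "normal_density 0 (s i) C1_differentiable_on UNIV" by (rule normal_density_C1[OF s])
  show "normal_density 0 (s i) \<in> borel_measurable borel" by simp
  show "(\<integral>\<^sup>+t. ennreal (normal_density 0 (s i) t) \<partial>lborel) = 1"
    using s by (subst nn_integral_eq_integral) (auto simp: integrable_normal_density integral_normal_density)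
qed (simp add: normal_prod_density_def)

lemma normal_prod_density_moment:
  assumes s: "\<And>i. 0 < s i" and m: "\<And>i. m i \<le> 2"
  shows "has_bochner_integral lborel (\<lambda>x. normal_prod_density s x * (\<Prod>i\<in>UNIV. (x $ i) ^ m i))
           (\<Prod>i\<in>UNIV. if m i = 0 then 1 else if m i = 1 then 0 else (s i)\<^sup>2)"
proof -
  define f where "f i t = normal_density 0 (s i) t * t ^ m i" for i t
  have hb: "has_bochner_integral lborel (f i) (if m i = 0 then 1 else if m i = 1 then 0 else (s i)\<^sup>2)" for i
    unfolding f_def[abs_def] by (rule normal_density_moment_le_2[OF s m])
  have int: "integrable lborel (f i)" for i
    using hb by (rule integrable.intros)
  have eq: "(\<lambda>x. normal_prod_density s x * (\<Prod>i\<in>UNIV. (x $ i) ^ m i)) = (\<lambda>x. \<Prod>i\<in>UNIV. f i (x $ i))"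
    by (simp add: normal_prod_density_def f_def prod.distrib fun_eq_iff)
  have "(\<integral>t. f i t \<partial>lborel) = (if m i = 0 then 1 else if m i = 1 then 0 else (s i)\<^sup>2)" for i
    using hb by (rule has_bochner_integral_integral_eq)
  then show ?thesis
    unfolding eq has_bochner_integral_iff lborel_integral_prod_vec(2)[OF int]
    using lborel_integral_prod_vec(1)[OF int] by simp
qed

lemma normal_prod_density_integral:
  assumes "\<And>i. 0 < s i"
  shows "has_bochner_integral lborel (normal_prod_density s) 1"
  using normal_prod_density_moment[OF assms, of "\<lambda>_. 0"] by simp

lemma normal_prod_density_second_moment:
  fixes s :: "'n::finite \<Rightarrow> real"
  assumes s: "\<And>i. 0 < s i"
  shows "has_bochner_integral lborel (\<lambda>x. normal_prod_density s x * (x $ j * x $ k))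
           (if j = k then (s j)\<^sup>2 else 0)"
proof -
  define m where "m i = (if i = j then 1 else 0) + (if i = k then 1 else (0::nat))" for i :: 'n
  have "(\<Prod>i\<in>UNIV. (x $ i) ^ m i) = x $ j * x $ k" for x :: "real^'n"
    unfolding m_def power_add prod.distrib
    by (simp add: if_distrib[of "\<lambda>e. (x $ _) ^ e"] cong: if_cong)
  moreover have "(\<Prod>i\<in>UNIV. if m i = 0 then 1 else if m i = 1 then 0 else (s i)\<^sup>2)
      = (if j = k then (s j)\<^sup>2 else 0)"
  proof (cases "j = k")
    case True
    then have "(\<lambda>i. if m i = 0 then 1 else if m i = 1 then 0 else (s i)\<^sup>2) = (\<lambda>i. if i = j then (s j)\<^sup>2 else 1)"
      by (auto simp: m_def fun_eq_iff)
    then show ?thesis using True by (simp only:) (simp add: prod.delta)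
  next
    case False
    then have "m j = 1" by (simp add: m_def)
    then have "(\<Prod>i\<in>UNIV. if m i = 0 then 1 else if m i = 1 then 0 else (s i)\<^sup>2) = 0"
      by (intro prod_zero) auto
    then show ?thesis using False by simp
  qed
  moreover have "m i \<le> 2" for i by (simp add: m_def)
  ultimately show ?thesis
    using normal_prod_density_moment[of s m, OF s] by simp
qed

lemma normal_prod_density_quadratic:
  assumes s: "\<And>i. 0 < s i"
  shows "has_bochner_integral lborel (\<lambda>x. normal_prod_density s x * (c + x \<bullet> (B *v x)))
           (c + (\<Sum>i\<in>UNIV. B $ i $ i * (s i)\<^sup>2))"
proof -
  have eq: "normal_prod_density s x * (c + x \<bullet> (B *v x))
      = c * normal_prod_density s x
        + (\<Sum>j\<in>UNIV. \<Sum>k\<in>UNIV. B $ j $ k * (normal_prod_density s x * (x $ j * x $ k)))" for x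
    by (simp add: inner_vec_def matrix_vector_mult_def sum_distrib_left algebra_simps)
  have "has_bochner_integral lborel
      (\<lambda>x. c * normal_prod_density s x
        + (\<Sum>j\<in>UNIV. \<Sum>k\<in>UNIV. B $ j $ k * (normal_prod_density s x * (x $ j * x $ k))))
      (c * 1 + (\<Sum>j\<in>UNIV. \<Sum>k\<in>UNIV. B $ j $ k * (if j = k then (s j)\<^sup>2 else 0)))"
    by (intro has_bochner_integral_add has_bochner_integral_sum has_bochner_integral_mult_right
        normal_prod_density_integral normal_prod_density_second_moment s)
  then show ?thesis
    by (simp add: eq if_distrib[of "\<lambda>v. _ * v"] cong: if_cong)
qed

lemma ln_normal_prod_density:
  fixes s :: "'n::finite \<Rightarrow> real"
  assumes s: "\<And>i. 0 < s i"
  shows "ln (normal_prod_density s x)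
       = - real CARD('n) * ln (2 * pi) / 2 - x \<bullet> (diag_mat (\<lambda>i. 1 / (s i)\<^sup>2) *v x) / 2
         - (\<Sum>i\<in>UNIV. ln (s i))"
proof -
  have "ln (normal_prod_density s x) = (\<Sum>i\<in>UNIV. ln (normal_density 0 (s i) (x $ i)))"
    unfolding normal_prod_density_def using s
    by (simp add: ln_prod normal_density_pos less_imp_neq[symmetric])
  also have "\<dots> = (\<Sum>i\<in>UNIV. - ln (2 * pi) / 2 - ln (s i) - 1 / (s i)\<^sup>2 * (x $ i)\<^sup>2 / 2)"
    using s by (intro sum.cong refl) (simp add: ln_normal_density field_simps)
  also have "\<dots> = - real CARD('n) * ln (2 * pi) / 2 - (\<Sum>i\<in>UNIV. ln (s i))
      - (\<Sum>i\<in>UNIV. 1 / (s i)\<^sup>2 * (x $ i)\<^sup>2) / 2"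
    by (simp add: sum_subtractf sum_divide_distrib)
  finally show ?thesis
    by (simp add: inner_diag_mat)
qed

lemma gauss_density_pos: "0 < det S \<Longrightarrow> 0 < gauss_density S x"
  unfolding gauss_density_def by simp

lemma ln_gauss_density:
  fixes S :: "real^'n^'n"
  assumes S: "0 < det S"
  shows "ln (gauss_density S x)
       = - real CARD('n) * ln (2 * pi) / 2 - x \<bullet> (matrix_inv S *v x) / 2 - ln (det S) / 2"
proof -
  have p: "0 < (2 * pi) ^ CARD('n) * det S" using S by simp
  have "ln (gauss_density S x) = - (x \<bullet> (matrix_inv S *v x)) / 2 - ln (sqrt ((2 * pi) ^ CARD('n) * det S))"
    unfolding gauss_density_def using p S by (simp add: ln_div)
  also have "ln (sqrt ((2 * pi) ^ CARD('n) * det S)) = (real CARD('n) * ln (2 * pi) + ln (det S)) / 2"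
    using p S by (simp add: ln_sqrt ln_mult ln_realpow algebra_simps)
  finally show ?thesis by (simp add: field_simps)
qed

lemma KL_normal_prod_gauss:
  fixes S :: "real^'n^'n" and s :: "'n \<Rightarrow> real"
  assumes S: "0 < det S" and s: "\<And>i. 0 < s i"
  shows "KL_dens (normal_prod_density s) (gauss_density S)
       = ereal ((\<Sum>i\<in>UNIV. matrix_inv S $ i $ i * (s i)\<^sup>2 - 1) / 2 - (\<Sum>i\<in>UNIV. ln (s i))
                + ln (det S) / 2)"
proof -
  define D where "D = diag_mat (\<lambda>i. 1 / (s i)\<^sup>2)"
  define B where "B = (1 / 2) *\<^sub>R (matrix_inv S - D)"
  define c where "c = ln (det S) / 2 - (\<Sum>i\<in>UNIV. ln (s i))"
  have B: "x \<bullet> (B *v x) = x \<bullet> (matrix_inv S *v x) / 2 - x \<bullet> (D *v x) / 2" for x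
    by (simp add: B_def matrix_vector_mult_diff_rdistrib inner_diff_right diff_divide_distrib
        flip: scaleR_matrix_vector_assoc)
  have "ln (normal_prod_density s x / gauss_density S x)
      = ln (normal_prod_density s x) - ln (gauss_density S x)" for x
    using normal_prod_density_pos[of s x, OF s] gauss_density_pos[OF S, of x] by (simp add: ln_div)
  then have "ln (normal_prod_density s x / gauss_density S x) = c + x \<bullet> (B *v x)" for x
    unfolding ln_normal_prod_density[OF s] ln_gauss_density[OF S] B c_def D_def by simp
  then have "has_bochner_integral lborel
      (\<lambda>x. normal_prod_density s x * ln (normal_prod_density s x / gauss_density S x))
      (c + (\<Sum>i\<in>UNIV. B $ i $ i * (s i)\<^sup>2))"
    using normal_prod_density_quadratic[OF s] by simp
  moreover have "B $ i $ i * (s i)\<^sup>2 = (matrix_inv S $ i $ i * (s i)\<^sup>2 - 1) / 2" for i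
    using s[of i] by (simp add: B_def D_def diag_mat_def field_simps)
  ultimately show ?thesis
    by (simp add: KL_dens_eq_integral integrable.intros has_bochner_integral_integral_eq
        c_def sum_divide_distrib)
qed

lemma gauss_density_mat_1: "gauss_density (mat 1 :: real^'n^'n) = normal_prod_density (\<lambda>_. 1)"
proof
  fix x :: "real^'n"
  have "matrix_inv (mat 1 :: real^'n^'n) = mat 1" by (rule matrix_inv_eqI) simp
  then have "gauss_density (mat 1 :: real^'n^'n) x
      = exp (- (\<Sum>i\<in>UNIV. (x $ i)\<^sup>2) / 2) / sqrt ((2 * pi) ^ CARD('n))"
    by (simp add: gauss_density_def inner_vec_def power2_eq_square)
  also have "\<dots> = (\<Prod>i\<in>UNIV. exp (- (x $ i)\<^sup>2 / 2) / sqrt (2 * pi))"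
  proof -
    have "exp (- (\<Sum>i\<in>UNIV. (x $ i)\<^sup>2) / 2) = (\<Prod>i\<in>UNIV. exp (- (x $ i)\<^sup>2 / 2))"
      by (simp add: exp_sum[symmetric] sum_negf sum_divide_distrib)
    moreover have "sqrt ((2 * pi) ^ CARD('n)) = (\<Prod>i\<in>(UNIV :: 'n set). sqrt (2 * pi))"
      by (simp only: real_sqrt_power prod_constant)
    ultimately show ?thesis by (simp add: prod_dividef)
  qed
  also have "\<dots> = normal_prod_density (\<lambda>_. 1) x"
    by (simp add: normal_prod_density_def normal_density_def)
  finally show "gauss_density (mat 1 :: real^'n^'n) x = normal_prod_density (\<lambda>_. 1) x" .
qed

lemma KL_std_normal_gauss:
  fixes S :: "real^'n^'n"
  assumes "0 < det S"
  shows "KL_dens (gauss_density (mat 1 :: real^'n^'n)) (gauss_density S)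
       = ereal ((trace (matrix_inv S) - real CARD('n) + ln (det S)) / 2)"
  using KL_normal_prod_gauss[OF assms, of "\<lambda>_. 1"]
  by (simp add: gauss_density_mat_1 trace_def sum_subtractf diff_divide_distrib)

text \<open>The witness is the optimal mean-field approximation: centred normals with variances 1 / (S^-1)_ii.\<close>

lemma mean_field_KL_le:
  fixes S :: "real^'n^'n"
  assumes S: "0 < det S" and diag: "\<And>i. 0 < matrix_inv S $ i $ i"
  shows "(INF q\<in>prod_densities. KL_dens q (gauss_density S))
       \<le> ereal ((\<Sum>i\<in>UNIV. ln (matrix_inv S $ i $ i)) / 2 + ln (det S) / 2)"
proof -
  define s where "s i = 1 / sqrt (matrix_inv S $ i $ i)" for i
  have s: "0 < s i" for i using diag[of i] by (simp add: s_def)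
  have "matrix_inv S $ i $ i * (s i)\<^sup>2 = 1" for i
    using diag[of i] by (simp add: s_def power_divide)
  then have one: "(\<Sum>i\<in>UNIV. matrix_inv S $ i $ i * (s i)\<^sup>2 - 1) = 0"
    by simp
  have "ln (s i) = - ln (matrix_inv S $ i $ i) / 2" for i
    using diag[of i] by (simp add: s_def ln_div ln_sqrt)
  then have ln_s: "(\<Sum>i\<in>UNIV. ln (s i)) = - (\<Sum>i\<in>UNIV. ln (matrix_inv S $ i $ i)) / 2"
    by (simp add: sum_negf sum_divide_distrib)
  have "(INF q\<in>prod_densities. KL_dens q (gauss_density S))
      \<le> KL_dens (normal_prod_density s) (gauss_density S)"
    by (rule INF_lower[OF normal_prod_density_in_prod_densities[OF s]])
  also have "\<dots> = ereal ((\<Sum>i\<in>UNIV. ln (matrix_inv S $ i $ i)) / 2 + ln (det S) / 2)"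
    unfolding KL_normal_prod_gauss[OF S s] one ln_s by simp
  finally show ?thesis .
qed

section \<open>The mean-field bound\<close>

lemma mean_field_KL_rotated_le:
  fixes S R :: "real^'n^'n"
  assumes S: "sym_pos_def S" and R: "orthogonal_matrix R"
    and tr: "trace (matrix_inv S) = real CARD('n)"
    and L: "\<And>u. norm u = 1 \<Longrightarrow> u \<bullet> (matrix_inv S *v u) \<le> L"
  shows "(INF q\<in>prod_densities. KL_dens q (gauss_density (R ** S ** transpose R)))
       \<le> ereal (ln (det S) / 2
                - (\<Sum>i\<in>UNIV. ((R ** (matrix_inv S - mat 1) ** transpose R) $ i $ i)\<^sup>2) / (4 * L\<^sup>2))"
proof -
  define A where "A = matrix_inv S"
  define y where "y i = (R ** A ** transpose R) $ i $ i" for i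
  have unit: "norm (R $ i) = 1" for i
    using R by (simp add: orthogonal_matrix_orthonormal_rows row_def vec_lambda_eta)
  have y: "y i = R $ i \<bullet> (A *v R $ i)" for i
    unfolding y_def by (rule matrix_conj_entry)
  have y_pos: "0 < y i" for i
  proof -
    have "R $ i \<noteq> 0" using unit[of i] by auto
    then show ?thesis
      using sym_pos_def_matrix_inv[OF S] by (simp add: y A_def sym_pos_def_def)
  qed
  have y_le: "y i \<le> L" for i
    unfolding y A_def by (rule L[OF unit])
  have "(\<Sum>i\<in>UNIV. y i) = trace (R ** A ** transpose R)"
    by (simp add: y_def trace_def)
  then have sum_y: "(\<Sum>i\<in>UNIV. y i) = real CARD('n)"
    using tr by (simp add: trace_orthogonal_conj[OF R] A_def)
  have "real CARD('n) \<le> real CARD('n) * L"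
    using sum_mono[of UNIV y "\<lambda>_. L"] y_le sum_y by (simp add: mult.commute)
  then have "1 \<le> L" by simp
  have "R ** (A - mat 1) ** transpose R = R ** A ** transpose R - mat 1"
    by (simp only: matrix_diff_ldistrib matrix_diff_rdistrib orthogonal_conj_mat_1[OF R])
  then have diag: "(R ** (A - mat 1) ** transpose R) $ i $ i = y i - 1" for i
    unfolding y_def by (simp add: mat_def)
  have "(INF q\<in>prod_densities. KL_dens q (gauss_density (R ** S ** transpose R)))
      \<le> ereal ((\<Sum>i\<in>UNIV. ln (y i)) / 2 + ln (det S) / 2)"
    using mean_field_KL_le[of "R ** S ** transpose R"] sym_pos_def_det_pos[OF S] y_pos
    by (simp add: det_orthogonal_conj[OF R] y_def A_def
        matrix_inv_orthogonal_conj[OF R sym_pos_def_mult_matrix_inv[OF S]])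
  also have "(\<Sum>i\<in>UNIV. ln (y i)) \<le> (\<Sum>i\<in>UNIV. (y i - 1) - (y i - 1)\<^sup>2 / (2 * L\<^sup>2))"
    using y_pos y_le \<open>1 \<le> L\<close> by (intro sum_mono ln_le_quadratic)
  also have "\<dots> = - (\<Sum>i\<in>UNIV. (y i - 1)\<^sup>2) / (2 * L\<^sup>2)"
    by (simp add: sum_subtractf sum_y sum_divide_distrib)
  finally show ?thesis
    unfolding A_def[symmetric] diag by (simp add: field_simps)
qed

lemma enn2ereal_nn_integral_le_integral:
  assumes "integrable M g" and "AE x in M. 0 \<le> g x" and "AE x in M. f x \<le> ennreal (g x)"
  shows "enn2ereal (\<integral>\<^sup>+x. f x \<partial>M) \<le> ereal (\<integral>x. g x \<partial>M)"
proof -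
  have "(\<integral>\<^sup>+x. f x \<partial>M) \<le> (\<integral>\<^sup>+x. ennreal (g x) \<partial>M)"
    using assms(3) by (rule nn_integral_mono_AE)
  also have "\<dots> = ennreal (\<integral>x. g x \<partial>M)"
    using assms(1,2) by (rule nn_integral_eq_integral)
  finally show ?thesis
    using integral_nonneg_AE[OF assms(2)] by (simp add: less_eq_ennreal.rep_eq)
qed

lemma conj_diag_sq_le_ln_det:
  fixes Sigma P R :: "real^'n^'n"
  assumes S: "sym_pos_def Sigma" and tr: "trace (matrix_inv Sigma) = real CARD('n)"
    and P: "orthogonal_matrix P" and A: "matrix_inv Sigma = P ** diag_mat lam ** transpose P"
    and lam: "\<And>j. 0 < lam j" and L: "\<And>j. lam j \<le> L" and R: "orthogonal_matrix R"
  shows "(\<Sum>i\<in>UNIV. ((R ** (matrix_inv Sigma - mat 1) ** transpose R) $ i $ i)\<^sup>2) / (4 * L\<^sup>2)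
       \<le> ln (det Sigma) / 2"
proof -
  have "(\<Sum>i\<in>UNIV. ((R ** (matrix_inv Sigma - mat 1) ** transpose R) $ i $ i)\<^sup>2)
      \<le> frob_sq (matrix_inv Sigma - mat 1)"
    using sum_diag_sq_le_frob_sq[of "R ** (matrix_inv Sigma - mat 1) ** transpose R"]
    by (simp add: frob_sq_orthogonal_conj[OF R])
  then have "(\<Sum>i\<in>UNIV. ((R ** (matrix_inv Sigma - mat 1) ** transpose R) $ i $ i)\<^sup>2) / (2 * L\<^sup>2)
      \<le> frob_sq (matrix_inv Sigma - mat 1) / (2 * L\<^sup>2)"
    by (rule divide_right_mono) simp
  also have "\<dots> \<le> ln (det Sigma)"
    using frob_sq_le_neg_ln_det[OF P A tr lam L] by (simp add: ln_det_matrix_inv[OF S])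
  finally show ?thesis
    by simp
qed

lemma haar_expected_mean_field_KL_le:
  fixes Sigma P :: "real^'n^'n"
  assumes H: "haar_orthogonal M" and S: "sym_pos_def Sigma"
    and tr: "trace (matrix_inv Sigma) = real CARD('n)"
    and P: "orthogonal_matrix P" and A: "matrix_inv Sigma = P ** diag_mat lam ** transpose P"
    and lam: "\<And>j. 0 < lam j" and L: "\<And>j. lam j \<le> L"
  shows "enn2ereal (\<integral>\<^sup>+ R. e2ennreal (INF q\<in>prod_densities.
              KL_dens q (gauss_density (R ** Sigma ** transpose R))) \<partial>M)
         \<le> ereal (ln (det Sigma) / 2
                  - frob_sq (matrix_inv Sigma - mat 1) / ((real CARD('n) + 2) * (2 * L\<^sup>2)))"
proof -
  interpret prob_space M by (rule haar_orthogonalD(1)[OF H])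
  define C where "C = matrix_inv Sigma - mat 1"
  define g where "g R = ln (det Sigma) / 2 - (\<Sum>i\<in>UNIV. ((R ** C ** transpose R) $ i $ i)\<^sup>2) / (4 * L\<^sup>2)"
    for R :: "real^'n^'n"
  have C: "transpose C = C" "trace C = 0"
    using sym_pos_def_matrix_inv[OF S] tr
    by (simp_all add: C_def sym_pos_def_def transpose_diff trace_sub trace_I)
  have rayleigh: "u \<bullet> (matrix_inv Sigma *v u) \<le> L" if "norm u = 1" for u
    unfolding A by (rule rayleigh_conj_diag_le[OF P L that])
  have int: "integrable M (\<lambda>R. \<Sum>i\<in>UNIV. ((R ** C ** transpose R) $ i $ i)\<^sup>2)"
    by (intro haar_integrable_continuous[OF H] continuous_on_sum continuous_on_power
        continuous_on_conj_entry)
  have "enn2ereal (\<integral>\<^sup>+ R. e2ennreal (INF q\<in>prod_densities.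
      KL_dens q (gauss_density (R ** Sigma ** transpose R))) \<partial>M) \<le> ereal (\<integral>R. g R \<partial>M)"
  proof (rule enn2ereal_nn_integral_le_integral)
    show "integrable M g"
      unfolding g_def using int by simp
    show "AE R in M. 0 \<le> g R"
      using haar_orthogonalD(4)[OF H]
      by eventually_elim
        (use conj_diag_sq_le_ln_det[OF S tr P A lam L] in \<open>simp add: g_def C_def\<close>)
    show "AE R in M. e2ennreal (INF q\<in>prod_densities.
        KL_dens q (gauss_density (R ** Sigma ** transpose R))) \<le> ennreal (g R)"
      using haar_orthogonalD(4)[OF H]
    proof eventually_elim
      case (elim R)
      with rayleigh have "(INF q\<in>prod_densities.
          KL_dens q (gauss_density (R ** Sigma ** transpose R))) \<le> ereal (g R)"
        using mean_field_KL_rotated_le[OF S _ tr] by (simp add: g_def C_def)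
      then show ?case
        using e2ennreal_mono by fastforce
    qed
  qed
  also have "(\<integral>R. g R \<partial>M) = ln (det Sigma) / 2 - frob_sq C / ((real CARD('n) + 2) * (2 * L\<^sup>2))"
    using haar_conj_diag_sq_expectation[OF H C] int by (simp add: g_def prob_space)
  finally show ?thesis
    unfolding C_def .
qed

theorem theorem4:
  fixes Sigma :: "real^'n^'n" and M :: "(real^'n^'n) measure"
  assumes "sym_pos_def Sigma"
    and "\<forall>i. matrix_inv Sigma $ i $ i = 1"
    and "haar_orthogonal M"
  shows "enn2ereal (\<integral>\<^sup>+ R. e2ennreal (INF q\<in>prod_densities.
              KL_dens q (gauss_density (R ** Sigma ** transpose R))) \<partial>M)
         \<le> ereal (1 - 2 / ((real CARD('n) + 2) * (cond_number Sigma)\<^sup>2))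
           * KL_dens (gauss_density (mat 1 :: real^'n^'n)) (gauss_density Sigma)"
proof -
  obtain P lam l L where P: "orthogonal_matrix P" and A: "matrix_inv Sigma = P ** diag_mat lam ** transpose P"
    and lam: "\<And>j. 0 < lam j" and l: "0 < l" "\<And>j. l \<le> lam j" and L: "\<And>j. lam j \<le> L"
    and kappa: "cond_number Sigma = L / l"
    using sym_pos_def_inverse_spectrum[OF assms(1)] by metis
  define K where "K = ln (det Sigma) / 2"
  define D where "D = real CARD('n) + 2"
  define F where "F = frob_sq (matrix_inv Sigma - mat 1)"
  have tr: "trace (matrix_inv Sigma) = real CARD('n)"
    using assms(2) by (simp add: trace_def)
  have "0 < L" using l(1) l(2) L order.strict_trans2 order.trans by blast
  have KL_std: "KL_dens (gauss_density (mat 1 :: real^'n^'n)) (gauss_density Sigma) = ereal K"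
    using KL_std_normal_gauss[OF sym_pos_def_det_pos[OF assms(1)]] tr by (simp add: K_def)
  have "4 * l\<^sup>2 * K \<le> F"
    using neg_ln_det_le_frob_sq[OF P A tr l] l(1)
    by (simp add: F_def K_def ln_det_matrix_inv[OF assms(1)] pos_le_divide_eq mult.commute)
  then have F: "4 * l\<^sup>2 * K / (D * (2 * L\<^sup>2)) \<le> F / (D * (2 * L\<^sup>2))"
    by (rule divide_right_mono) (simp add: D_def)
  have "enn2ereal (\<integral>\<^sup>+ R. e2ennreal (INF q\<in>prod_densities.
      KL_dens q (gauss_density (R ** Sigma ** transpose R))) \<partial>M) \<le> ereal (K - F / (D * (2 * L\<^sup>2)))"
    using haar_expected_mean_field_KL_le[OF assms(3,1) tr P A lam L]
    unfolding K_def D_def F_def .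
  also have "\<dots> \<le> ereal (K - 4 * l\<^sup>2 * K / (D * (2 * L\<^sup>2)))"
    using F by simp
  also have "\<dots> = ereal (1 - 2 / (D * (L / l)\<^sup>2))
      * KL_dens (gauss_density (mat 1 :: real^'n^'n)) (gauss_density Sigma)"
    unfolding KL_std using l(1) \<open>0 < L\<close>
    by (simp add: power_divide left_diff_distrib right_diff_distrib ac_simps)
  finally show ?thesis
    unfolding kappa D_def .
qed

end
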